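(* Let $\mu$ be a self-similar measure on $\mathbb{R}^2$ with respect to an IFS $\Phi$ of contracting similarities whose attractor is not contained in an affine line. \begin{enumerate} \item If either $|G_\Phi|\ge 5$ or $|G_\Phi\cap SO(\mathbb{R}^2)|>2$, then $\mu$ does not admit a $1$-slicing. \item If $\Phi$ satisfies the strong separation condition, then $\mu$ does not admit a $1$-slicing. \end{enumerate}
   Context: An IFS $\Phi=\{\phi_i\}_{i=1}^l$ ($l\ge 2$) consists of contracting similarities $\phi_i(z)=\alpha_iO_iz+t_i$ with $0<\alpha_i<1$, $O_i\in O(\mathbb{R}^2)$; its attractor $F$ is the unique nonempty compact set with $F=\bigcup_i\phi_i(F)$. $G_\Phi\le O(\mathbb{R}^2)$ is the group generated by $O_1,\dots,O_l$. The strong separation condition (SSC) means $\phi_i(F)\cap\phi_j(F)=\emptyset$ for $i\ne j$. A self-similar measure for $\Phi$ is the unique Borel probability measure with $\mu=\sum_i p_i\,\phi_i\mu$ for a probability vector $(p_1,\dots,p_l)$ with all $p_i>0$. For a line $V\in G(2,1)$ through the origin, $P_{V^\perp}$ denotes orthogonal projection onto $V^\perp$. $\mu$ admits a $1$-slicing if there is $V\in G(2,1)$ such that (a) $O_i(V)=V$ for every $i$, and (b) the conditional measures of $\mu$ on translates of $V$, obtained by disintegrating $\mu$ with respect to $P_{V^\perp}$, are $P_{V^\perp}\mu$-almost surely exact dimensional of dimension $1$. Otherwise $\mu$ does not admit a $1$-slicing. *)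

theory Defs
  imports "HOL-Probability.Probability"
begin

definition sim_map :: "(nat \<Rightarrow> real) \<Rightarrow> (nat \<Rightarrow> real^2^2) \<Rightarrow> (nat \<Rightarrow> real^2) \<Rightarrow> nat \<Rightarrow> real^2 \<Rightarrow> real^2"
  where "sim_map \<alpha> Orth t i z = \<alpha> i *\<^sub>R (Orth i *v z) + t i"

definition is_IFS :: "nat \<Rightarrow> (nat \<Rightarrow> real) \<Rightarrow> (nat \<Rightarrow> real^2^2) \<Rightarrow> (nat \<Rightarrow> real^2) \<Rightarrow> bool"
  where "is_IFS l \<alpha> Orth t \<longleftrightarrow> l \<ge> 2 \<and> (\<forall>i<l. 0 < \<alpha> i \<and> \<alpha> i < 1 \<and> orthogonal_matrix (Orth i))"

definition is_attractor :: "nat \<Rightarrow> (nat \<Rightarrow> real) \<Rightarrow> (nat \<Rightarrow> real^2^2) \<Rightarrow> (nat \<Rightarrow> real^2) \<Rightarrow> (real^2) set \<Rightarrow> bool"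
  where "is_attractor l \<alpha> Orth t F \<longleftrightarrow> F \<noteq> {} \<and> compact F \<and> F = (\<Union>i<l. sim_map \<alpha> Orth t i ` F)"

inductive_set gen_group :: "nat \<Rightarrow> (nat \<Rightarrow> real^2^2) \<Rightarrow> (real^2^2) set"
  for l :: nat and Orth :: "nat \<Rightarrow> real^2^2" where
  gen_id: "mat 1 \<in> gen_group l Orth"
| gen_gen: "i < l \<Longrightarrow> Orth i \<in> gen_group l Orth"
| gen_mult: "A \<in> gen_group l Orth \<Longrightarrow> B \<in> gen_group l Orth \<Longrightarrow> A ** B \<in> gen_group l Orth"
| gen_inv: "A \<in> gen_group l Orth \<Longrightarrow> matrix_inv A \<in> gen_group l Orth"

definition in_affine_line :: "(real^2) set \<Rightarrow> bool"
  where "in_affine_line F \<longleftrightarrow> (\<exists>a v. v \<noteq> 0 \<and> F \<subseteq> {a + s *\<^sub>R v | s. True})"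

definition SSC :: "nat \<Rightarrow> (nat \<Rightarrow> real) \<Rightarrow> (nat \<Rightarrow> real^2^2) \<Rightarrow> (nat \<Rightarrow> real^2) \<Rightarrow> (real^2) set \<Rightarrow> bool"
  where "SSC l \<alpha> Orth t F \<longleftrightarrow>
     (\<forall>i<l. \<forall>j<l. i \<noteq> j \<longrightarrow> sim_map \<alpha> Orth t i ` F \<inter> sim_map \<alpha> Orth t j ` F = {})"

definition self_similar_measure :: "nat \<Rightarrow> (nat \<Rightarrow> real) \<Rightarrow> (nat \<Rightarrow> real^2^2) \<Rightarrow> (nat \<Rightarrow> real^2)
    \<Rightarrow> (nat \<Rightarrow> real) \<Rightarrow> (real^2) measure \<Rightarrow> bool"
  where "self_similar_measure l \<alpha> Orth t p \<mu> \<longleftrightarrow>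
     (\<forall>i<l. 0 < p i) \<and> (\<Sum>i<l. p i) = 1 \<and>
     prob_space \<mu> \<and> sets \<mu> = sets borel \<and>
     (\<forall>A \<in> sets borel. emeasure \<mu> A =
        (\<Sum>i<l. ennreal (p i) * emeasure \<mu> (sim_map \<alpha> Orth t i -` A)))"

definition orth_proj :: "(real^2) set \<Rightarrow> real^2 \<Rightarrow> real^2"
  where "orth_proj W x = (THE y. y \<in> W \<and> x - y \<in> orthogonal_comp W)"

definition exact_dimensional :: "(real^2) measure \<Rightarrow> real \<Rightarrow> bool"
  where "exact_dimensional \<nu> d \<longleftrightarrow>
     (AE x in \<nu>. ((\<lambda>r. ln (measure \<nu> (cball x r)) / ln r) \<longlongrightarrow> d) (at_right 0))"

definition is_disintegration :: "(real^2) measure \<Rightarrow> (real^2 \<Rightarrow> real^2) \<Rightarrow> (real^2 \<Rightarrow> (real^2) measure) \<Rightarrow> bool"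
  where "is_disintegration \<mu> P \<kappa> \<longleftrightarrow>
     (AE y in distr \<mu> borel P. prob_space (\<kappa> y) \<and> sets (\<kappa> y) = sets borel
         \<and> emeasure (\<kappa> y) (P -` {y}) = 1) \<and>
     (\<forall>A \<in> sets borel. (\<lambda>y. emeasure (\<kappa> y) A) \<in> borel_measurable borel \<and>
         emeasure \<mu> A = (\<integral>\<^sup>+ y. emeasure (\<kappa> y) A \<partial>distr \<mu> borel P))"

definition admits_1_slicing :: "nat \<Rightarrow> (nat \<Rightarrow> real^2^2) \<Rightarrow> (real^2) measure \<Rightarrow> bool"
  where "admits_1_slicing l Orth \<mu> \<longleftrightarrow>
     (\<exists>V. subspace V \<and> dim V = 1 \<and> (\<forall>i<l. (\<lambda>z. Orth i *v z) ` V = V) \<and>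
        (\<exists>\<kappa>. is_disintegration \<mu> (orth_proj (orthogonal_comp V)) \<kappa> \<and>
           (AE y in distr \<mu> borel (orth_proj (orthogonal_comp V)). exact_dimensional (\<kappa> y) 1)))"

end

theory Submission
  imports Defs
begin

text \<open>
  If \<mu> admits a 1-slicing along the line V = span {v}, every O_i maps V onto itself and hence acts
  by \<plusminus>1 on v and on the normal vector rot90 v.  So G_\<Phi> embeds into {\<plusminus>1}^2 and its rotations
  into the diagonal, which gives part (1).

  Under the strong separation condition the attractor contains no segment: by connectedness a
  segment in F lies in one piece \<phi>_i(F), and its preimage is a segment longer by the factor 1/\<alpha>_i.
  By compactness every window of some fixed length on a line parallel to V contains a gap of F of
  fixed length, and since the O_i preserve V, pulling windows back through the pieces carries these
  gaps down to all small scales: the slices of F parallel to V are uniformly porous.  A porous set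
  of the line is covered by A (M - 1)^k intervals of length M^-k, so for a fixed \<theta> < 1 no
  probability measure on a slice satisfies \<mu>(B(x, r)) \<le> r^\<theta> for small r at almost every x, as
  exact dimension 1 would require.  As \<mu> is carried by F, almost every conditional measure lives
  on such a slice.
\<close>

section \<open>Orthogonal maps of the plane preserving a line\<close>

definition rot90 :: "real^2 \<Rightarrow> real^2" where
  "rot90 x = vector [- x$2, x$1]"

lemma rot90_nth [simp]: "rot90 x $ 1 = - x$2" "rot90 x $ 2 = x$1"
  by (simp_all add: rot90_def)

lemma inner_vec2: "(x::real^2) \<bullet> y = x$1 * y$1 + x$2 * y$2"
  by (simp add: inner_vec_def sum_2)

lemma inner_rot90_self [simp]: "rot90 x \<bullet> x = 0" "x \<bullet> rot90 x = 0"
  by (simp_all add: inner_vec2 algebra_simps)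

lemma norm_vec2_power2: "(norm (x::real^2))\<^sup>2 = (x$1)\<^sup>2 + (x$2)\<^sup>2"
  unfolding power2_norm_eq_inner inner_vec2 by (simp add: power2_eq_square)

lemma norm_rot90 [simp]: "norm (rot90 x) = norm x"
  by (metis norm_vec2_power2 norm_ge_zero power2_eq_iff_nonneg rot90_nth add.commute power2_minus)

lemma unit_vec2_decomp:
  assumes "norm v = 1"
  shows "x = (x \<bullet> v) *\<^sub>R v + (x \<bullet> rot90 v) *\<^sub>R rot90 v"
proof -
  have h: "(v$1)\<^sup>2 + (v$2)\<^sup>2 = 1" using assms norm_vec2_power2[of v] by simp
  show ?thesis unfolding vec_eq_iff forall_2 by (simp add: inner_vec2) (use h in algebra)
qed

lemma det_eigenbasis2:
  fixes A :: "real^2^2"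
  assumes "norm v = 1" "A *v v = s *\<^sub>R v" "A *v rot90 v = s' *\<^sub>R rot90 v"
  shows "det A = s * s'"
proof -
  have "(v$1)\<^sup>2 + (v$2)\<^sup>2 = 1" using assms norm_vec2_power2[of v] by simp
  moreover have "A$1$1 * v$1 + A$1$2 * v$2 = s * v$1" "A$2$1 * v$1 + A$2$2 * v$2 = s * v$2"
    "A$1$1 * (- v$2) + A$1$2 * v$1 = s' * (- v$2)" "A$2$1 * (- v$2) + A$2$2 * v$1 = s' * v$1"
    using assms(2,3) unfolding vec_eq_iff forall_2 by (simp_all add: matrix_vector_mult_def sum_2)
  ultimately show ?thesis unfolding det_2 by algebra
qed

lemma matrix_vector_mult_unit_vec2_decomp:
  fixes A :: "real^2^2"
  assumes "norm v = 1"
  shows "A *v x = (x \<bullet> v) *\<^sub>R (A *v v) + (x \<bullet> rot90 v) *\<^sub>R (A *v rot90 v)"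
proof -
  have "A *v x = A *v ((x \<bullet> v) *\<^sub>R v + (x \<bullet> rot90 v) *\<^sub>R rot90 v)"
    using unit_vec2_decomp[OF assms, of x] by simp
  then show ?thesis by (simp only: matrix_vector_right_distrib matrix_vector_mult_scaleR)
qed

lemma matrix_eq_on_unit_basis2:
  fixes A B :: "real^2^2"
  assumes v: "norm v = 1" and "A *v v = B *v v" "A *v rot90 v = B *v rot90 v"
  shows "A = B"
proof -
  have "A *v x = B *v x" for x
    using matrix_vector_mult_unit_vec2_decomp[OF v, of A x] matrix_vector_mult_unit_vec2_decomp[OF v, of B x]
      assms(2,3) by simp
  then show ?thesis by (simp add: matrix_eq)
qed

lemma orthogonal_matrix_inner:
  assumes "orthogonal_matrix (A::real^'n^'n)"
  shows "(A *v x) \<bullet> (A *v y) = x \<bullet> y"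
proof -
  have "orthogonal_transformation ((*v) A)"
    using assms orthogonal_transformation_matrix[of "(*v) A"] matrix_vector_mul_linear by simp
  then show ?thesis unfolding orthogonal_transformation_def by blast
qed

lemma orthogonal_matrix_norm:
  assumes "orthogonal_matrix (A::real^'n^'n)"
  shows "norm (A *v x) = norm x"
  using orthogonal_matrix_inner[OF assms, of x x] by (simp add: norm_eq_sqrt_inner)

lemma orthogonal_matrix_right_inverse:
  assumes "orthogonal_matrix (A::real^'n^'n)"
  shows "A *v (transpose A *v x) = x"
proof -
  have "A *v (transpose A *v x) = (A ** transpose A) *v x" by (simp only: matrix_vector_mul_assoc)
  then show ?thesis using assms unfolding orthogonal_matrix_def by simp
qed

lemma unit_vector_spans_line:
  fixes V :: "(real^2) set"
  assumes "subspace V" "dim V = 1"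
  obtains v where "norm v = 1" "V = span {v}"
proof -
  obtain B where B: "B \<subseteq> V" "independent B" "V \<subseteq> span B" "card B = dim V"
    by (rule basis_exists)
  then obtain b where b: "B = {b}" using assms(2) by (auto simp: card_1_singleton_iff)
  then have "b \<noteq> 0" using B(2) dependent_zero by blast
  define u where "u = (1 / norm b) *\<^sub>R b"
  have eq: "b = norm b *\<^sub>R u" using \<open>b \<noteq> 0\<close> by (simp add: u_def)
  have "norm b *\<^sub>R u \<in> span {u}" by (intro span_mul span_base) simp
  then have "b \<in> span {u}" by (simp only: eq[symmetric])
  then have "span {b} \<subseteq> span {u}" by (intro span_minimal) (auto simp: subspace_span)
  moreover have "span {u} \<subseteq> span {b}" unfolding u_def
    by (intro span_minimal) (auto simp: span_base span_mul)
  moreover have "V = span {b}" using B b assms(1) span_minimal by blast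
  moreover have "norm u = 1" using \<open>b \<noteq> 0\<close> by (simp add: u_def)
  ultimately show ?thesis using that by blast
qed

lemma orth_proj_orthogonal_comp_line:
  assumes v: "norm v = 1"
  shows "orth_proj (orthogonal_comp (span {v})) x = x - (x \<bullet> v) *\<^sub>R v"
proof -
  let ?W = "orthogonal_comp (span {v})"
  have inW: "y \<in> ?W \<longleftrightarrow> y \<bullet> v = 0" for y
    by (auto simp: orthogonal_comp_def span_singleton orthogonal_def inner_commute)
  have vv: "v \<bullet> v = 1" using v by (simp add: norm_eq_1)
  let ?y = "x - (x \<bullet> v) *\<^sub>R v"
  show ?thesis unfolding orth_proj_def
  proof (rule the_equality)
    have "?y \<in> ?W" unfolding inW using vv by (simp add: inner_diff_left)
    moreover have "w \<bullet> (x - ?y) = 0" if "w \<in> ?W" for w using inW[of w] that by simp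
    ultimately show "?y \<in> ?W \<and> x - ?y \<in> orthogonal_comp ?W"
      unfolding orthogonal_comp_def orthogonal_def by blast
  next
    fix y assume y: "y \<in> ?W \<and> x - y \<in> orthogonal_comp ?W"
    have "rot90 v \<in> ?W" by (simp add: inW)
    then have "orthogonal (rot90 v) (x - y)" using y unfolding orthogonal_comp_def by blast
    then have "y \<bullet> rot90 v = x \<bullet> rot90 v" by (simp add: orthogonal_def inner_diff_right inner_commute)
    moreover have "y \<bullet> v = 0" using y inW by blast
    ultimately show "y = ?y"
      using unit_vec2_decomp[OF v, of y] unit_vec2_decomp[OF v, of x] by (simp add: algebra_simps)
  qed
qed

definition preserves_axes :: "real^2 \<Rightarrow> real^2^2 \<Rightarrow> bool" where
  "preserves_axes v A \<longleftrightarrow> invertible A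
     \<and> (\<exists>s\<in>{1, -1}. A *v v = s *\<^sub>R v) \<and> (\<exists>s\<in>{1, -1}. A *v rot90 v = s *\<^sub>R rot90 v)"

lemma orthogonal_matrix_preserves_axes:
  fixes A :: "real^2^2"
  assumes A: "orthogonal_matrix A" and v: "norm v = 1" and inv: "(\<lambda>z. A *v z) ` span {v} = span {v}"
  shows "preserves_axes v A"
proof -
  have "A *v v \<in> span {v}" using inv span_base[of v "{v}"] by blast
  then obtain k where k: "A *v v = k *\<^sub>R v" by (auto simp: span_singleton)
  have "\<bar>k\<bar> = 1" using orthogonal_matrix_norm[OF A, of v] k v by simp
  then have k1: "k \<in> {1, -1}" by auto
  have "(A *v rot90 v) \<bullet> (A *v v) = 0" using orthogonal_matrix_inner[OF A] by simp
  then have "(A *v rot90 v) \<bullet> v = 0" using k k1 by auto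
  then have r: "A *v rot90 v = ((A *v rot90 v) \<bullet> rot90 v) *\<^sub>R rot90 v"
    using unit_vec2_decomp[OF v, of "A *v rot90 v"] by simp
  then have "\<bar>(A *v rot90 v) \<bullet> rot90 v\<bar> = 1"
    using orthogonal_matrix_norm[OF A, of "rot90 v"] v by (metis mult.right_neutral norm_rot90 norm_scaleR)
  then have "\<exists>s\<in>{1, -1}. A *v rot90 v = s *\<^sub>R rot90 v" using r by (intro bexI) auto
  moreover have "invertible A" using A unfolding orthogonal_matrix_def invertible_def by blast
  ultimately show ?thesis unfolding preserves_axes_def using k k1 by blast
qed

lemma preserves_axes_mult:
  assumes "preserves_axes v A" "preserves_axes v B"
  shows "preserves_axes v (A ** B)"
proof -
  obtain s s' r r' where sign: "s \<in> {1, -1}" "s' \<in> {1, -1}" "r \<in> {1, -1}" "r' \<in> {1, -1}"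
    and eig: "A *v v = s *\<^sub>R v" "A *v rot90 v = s' *\<^sub>R rot90 v"
      "B *v v = r *\<^sub>R v" "B *v rot90 v = r' *\<^sub>R rot90 v"
    using assms unfolding preserves_axes_def by blast
  have "(A ** B) *v v = (s * r) *\<^sub>R v" "(A ** B) *v rot90 v = (s' * r') *\<^sub>R rot90 v"
    using eig by (simp_all add: matrix_vector_mul_assoc[symmetric] matrix_vector_mult_scaleR)
  moreover have "s * r \<in> {1, -1}" "s' * r' \<in> {1, -1}" using sign by auto
  moreover have "invertible (A ** B)" using assms invertible_mult unfolding preserves_axes_def by blast
  ultimately show ?thesis unfolding preserves_axes_def by blast
qed

lemma preserves_axes_matrix_inv:
  assumes "preserves_axes v A"
  shows "preserves_axes v (matrix_inv A)"
proof -
  have "\<exists>A'. A ** A' = mat 1 \<and> A' ** A = mat 1"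
    using assms unfolding preserves_axes_def invertible_def by blast
  then have inv: "A ** matrix_inv A = mat 1 \<and> matrix_inv A ** A = mat 1"
    unfolding matrix_inv_def by (rule someI_ex)
  then have "invertible (matrix_inv A)" unfolding invertible_def by blast
  moreover have "matrix_inv A *v x = s *\<^sub>R x" if "A *v x = s *\<^sub>R x" "s \<in> {1, -1}" for x s
  proof -
    have "matrix_inv A *v (A *v x) = x" by (simp add: matrix_vector_mul_assoc inv)
    then have "s *\<^sub>R (matrix_inv A *v x) = x" using that(1) by (simp add: matrix_vector_mult_scaleR)
    then show ?thesis using that(2) by (auto simp: minus_equation_iff)
  qed
  ultimately show ?thesis using assms unfolding preserves_axes_def by blast
qed

lemma gen_group_preserves_axes:
  assumes "\<And>i. i < l \<Longrightarrow> preserves_axes v (Orth i)" and "A \<in> gen_group l Orth"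
  shows "preserves_axes v A"
  using assms(2)
proof induction
  case gen_id
  show ?case unfolding preserves_axes_def invertible_def by (auto intro: exI[of _ 1])
qed (auto intro: assms(1) preserves_axes_mult preserves_axes_matrix_inv)

lemma card_axes_preserving_group:
  assumes v: "norm v = 1" and G: "\<And>A. A \<in> G \<Longrightarrow> preserves_axes v A"
  shows "finite G" "card G \<le> 4" "finite {A \<in> G. det A = 1}" "card {A \<in> G. det A = 1} \<le> 2"
proof -
  let ?f = "\<lambda>A::real^2^2. (A *v v, A *v rot90 v)"
  have inj: "inj_on ?f G" by (rule inj_onI) (use matrix_eq_on_unit_basis2[OF v] in auto)
  have signs: "\<exists>s s'. s \<in> {1, -1} \<and> s' \<in> {1, -1} \<and> ?f A = (s *\<^sub>R v, s' *\<^sub>R rot90 v)"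
    if "A \<in> G" for A using G[OF that] unfolding preserves_axes_def by blast
  have img: "?f ` G \<subseteq> {v, -v} \<times> {rot90 v, - rot90 v}"
  proof
    fix p assume "p \<in> ?f ` G"
    then obtain s s' where "s \<in> {1, -1}" "s' \<in> {1, -1}" "p = (s *\<^sub>R v, s' *\<^sub>R rot90 v)"
      using signs by blast
    then show "p \<in> {v, -v} \<times> {rot90 v, - rot90 v}" by auto
  qed
  have img1: "?f ` {A \<in> G. det A = 1} \<subseteq> {(v, rot90 v), (-v, - rot90 v)}"
  proof
    fix p assume "p \<in> ?f ` {A \<in> G. det A = 1}"
    then obtain A s s' where "det A = 1" "s \<in> {1, -1}" "s' \<in> {1, -1}" "p = ?f A"
      "?f A = (s *\<^sub>R v, s' *\<^sub>R rot90 v)"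
      using signs by blast
    moreover from this have "s * s' = 1" using det_eigenbasis2[OF v, of A s s'] by simp
    ultimately show "p \<in> {(v, rot90 v), (-v, - rot90 v)}" by auto
  qed
  have card2: "card {a, b} \<le> 2" for a b :: 'a by (cases "a = b") auto
  have card4: "card ({v, -v} \<times> {rot90 v, - rot90 v}) \<le> 4"
    unfolding card_cartesian_product using mult_le_mono[OF card2 card2] by simp
  show fin: "finite G" using finite_subset[OF img] finite_image_iff[OF inj] by blast
  have "card G = card (?f ` G)" using card_image[OF inj] by simp
  also have "\<dots> \<le> 4" using card_mono[OF _ img] card4 by simp
  finally show "card G \<le> 4" .
  show "finite {A \<in> G. det A = 1}" using fin by simp
  have "inj_on ?f {A \<in> G. det A = 1}" using inj by (rule inj_on_subset) auto
  then have "card {A \<in> G. det A = 1} = card (?f ` {A \<in> G. det A = 1})" by (rule card_image[symmetric])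
  also have "\<dots> \<le> 2" using card_mono[OF _ img1] card2[of "(v, rot90 v)" "(-v, - rot90 v)"] by simp
  finally show "card {A \<in> G. det A = 1} \<le> 2" .
qed

section \<open>Attractors and self-similar measures\<close>

locale ifs_attractor =
  fixes l :: nat and \<alpha> :: "nat \<Rightarrow> real" and Orth :: "nat \<Rightarrow> real^2^2" and t :: "nat \<Rightarrow> real^2"
    and F :: "(real^2) set"
  assumes ifs: "is_IFS l \<alpha> Orth t" and attractor: "is_attractor l \<alpha> Orth t F"
begin

abbreviation \<phi> :: "nat \<Rightarrow> real^2 \<Rightarrow> real^2" where "\<phi> \<equiv> sim_map \<alpha> Orth t"

lemma two_le_l: "2 \<le> l"
  and ratio_pos: "i < l \<Longrightarrow> 0 < \<alpha> i"
  and ratio_less_1: "i < l \<Longrightarrow> \<alpha> i < 1"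
  and orthogonal_Orth: "i < l \<Longrightarrow> orthogonal_matrix (Orth i)"
  using ifs unfolding is_IFS_def by auto

lemma attractor_nonempty: "F \<noteq> {}"
  and compact_attractor: "compact F"
  and attractor_eq: "F = (\<Union>i<l. \<phi> i ` F)"
  using attractor unfolding is_attractor_def by auto

lemma closed_attractor: "closed F"
  using compact_attractor by (rule compact_imp_closed)

lemma attractor_norm_bound:
  obtains B where "0 < B" "\<And>x. x \<in> F \<Longrightarrow> norm x \<le> B"
proof -
  obtain B where "\<forall>x\<in>F. norm x \<le> B" using compact_imp_bounded[OF compact_attractor] bounded_iff by blast
  then show ?thesis using that[of "max B 1"] by force
qed

lemma sim_map_in_attractor: "i < l \<Longrightarrow> x \<in> F \<Longrightarrow> \<phi> i x \<in> F"
  using attractor_eq by blast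

lemma attractor_piece: "x \<in> F \<Longrightarrow> \<exists>i<l. \<exists>w\<in>F. x = \<phi> i w"
  using attractor_eq by blast

lemma sim_map_line: "\<phi> i (y + s *\<^sub>R w) = \<phi> i y + (\<alpha> i * s) *\<^sub>R (Orth i *v w)"
  by (simp add: sim_map_def matrix_vector_right_distrib matrix_vector_mult_scaleR algebra_simps)

lemma sim_map_surj:
  assumes "i < l"
  obtains y where "\<phi> i y = p"
proof
  let ?y = "(1 / \<alpha> i) *\<^sub>R (transpose (Orth i) *v (p - t i))"
  have "\<phi> i ?y = \<alpha> i *\<^sub>R ((1 / \<alpha> i) *\<^sub>R (p - t i)) + t i"
    by (simp only: sim_map_def matrix_vector_mult_scaleR
        orthogonal_matrix_right_inverse[OF orthogonal_Orth[OF assms]])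
  also have "\<dots> = p" using ratio_pos[OF assms] by simp
  finally show "\<phi> i ?y = p" .
qed

lemma dist_sim_map: "i < l \<Longrightarrow> dist (\<phi> i x) (\<phi> i y) = \<alpha> i * dist x y"
proof -
  assume i: "i < l"
  have "\<phi> i x - \<phi> i y = \<alpha> i *\<^sub>R (Orth i *v (x - y))"
    by (simp add: sim_map_def matrix_vector_mult_diff_distrib scaleR_diff_right)
  then show ?thesis
    using ratio_pos[OF i] orthogonal_matrix_norm[OF orthogonal_Orth[OF i]] by (simp add: dist_norm)
qed

lemma sim_map_inj: "i < l \<Longrightarrow> \<phi> i x = \<phi> i y \<Longrightarrow> x = y"
  using dist_sim_map ratio_pos by (metis dist_eq_0_iff mult_eq_0_iff order_less_irrefl)

lemma max_ratio:
  obtains a where "0 < a" "a < 1" "\<And>i. i < l \<Longrightarrow> \<alpha> i \<le> a"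
proof
  have ne: "\<alpha> ` {..<l} \<noteq> {}" using two_le_l by (simp add: lessThan_empty_iff)
  then have "Max (\<alpha> ` {..<l}) \<in> \<alpha> ` {..<l}" by simp
  then show "0 < Max (\<alpha> ` {..<l})" "Max (\<alpha> ` {..<l}) < 1" using ratio_pos ratio_less_1 by auto
  show "\<alpha> i \<le> Max (\<alpha> ` {..<l})" if "i < l" for i using that by simp
qed

lemma min_ratio:
  obtains m where "0 < m" "\<And>i. i < l \<Longrightarrow> m \<le> \<alpha> i"
proof
  have ne: "\<alpha> ` {..<l} \<noteq> {}" using two_le_l by (simp add: lessThan_empty_iff)
  then have "Min (\<alpha> ` {..<l}) \<in> \<alpha> ` {..<l}" by simp
  then show "0 < Min (\<alpha> ` {..<l})" using ratio_pos by auto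
  show "Min (\<alpha> ` {..<l}) \<le> \<alpha> i" if "i < l" for i using that by simp
qed

lemma compact_piece: "compact (\<phi> i ` F)"
  by (intro compact_continuous_image compact_attractor)
    (auto simp: sim_map_def intro!: continuous_intros)

lemma infdist_sim_map_le:
  assumes "i < l" "\<alpha> i \<le> a"
  shows "infdist (\<phi> i x) F \<le> a * infdist x F"
proof -
  obtain f where f: "f \<in> F" "infdist x F = dist x f"
    using infdist_attains_inf[OF closed_attractor attractor_nonempty] by blast
  have "infdist (\<phi> i x) F \<le> dist (\<phi> i x) (\<phi> i f)"
    using sim_map_in_attractor[OF assms(1) f(1)] by (rule infdist_le)
  also have "\<dots> = \<alpha> i * dist x f" by (rule dist_sim_map[OF assms(1)])
  also have "\<dots> \<le> a * dist x f" using assms(2) by (intro mult_right_mono) auto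
  finally show ?thesis using f(2) by simp
qed

end

locale ifs_measure = ifs_attractor +
  fixes p :: "nat \<Rightarrow> real" and \<mu> :: "(real^2) measure"
  assumes self_similar: "self_similar_measure l \<alpha> Orth t p \<mu>"
begin

lemma prob_space_mu: "prob_space \<mu>"
  and sets_mu: "sets \<mu> = sets borel"
  and self_similar_emeasure:
    "A \<in> sets borel \<Longrightarrow> emeasure \<mu> A = (\<Sum>i<l. ennreal (p i) * emeasure \<mu> (\<phi> i -` A))"
  using self_similar unfolding self_similar_measure_def by auto

lemma sum_weights: "(\<Sum>i<l. ennreal (p i)) = 1"
  using self_similar unfolding self_similar_measure_def by (subst sum_ennreal) auto

lemma measure_far_from_attractor_le:
  assumes a: "0 < a" "\<And>i. i < l \<Longrightarrow> \<alpha> i \<le> a" and e: "0 \<le> e"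
  shows "measure \<mu> {x. e < infdist x F} \<le> measure \<mu> {x. e / a < infdist x F}"
proof -
  interpret prob_space \<mu> by (rule prob_space_mu)
  have far_sets: "{x. d < infdist x F} \<in> sets borel" for d
    by (intro borel_open open_Collect_less) (auto intro: continuous_intros)
  have preimage: "\<phi> i -` {x. e < infdist x F} \<subseteq> {x. e / a < infdist x F}" if "i < l" for i
  proof
    fix x assume "x \<in> \<phi> i -` {x. e < infdist x F}"
    then have "e < infdist (\<phi> i x) F" by simp
    also have "\<dots> \<le> a * infdist x F" by (rule infdist_sim_map_le[OF that a(2)[OF that]])
    finally show "x \<in> {x. e / a < infdist x F}" using a(1) by (simp add: field_simps)
  qed
  have "emeasure \<mu> {x. e < infdist x F} = (\<Sum>i<l. ennreal (p i) * emeasure \<mu> (\<phi> i -` {x. e < infdist x F}))"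
    by (rule self_similar_emeasure[OF far_sets])
  also have "\<dots> \<le> (\<Sum>i<l. ennreal (p i) * emeasure \<mu> {x. e / a < infdist x F})"
    using preimage far_sets sets_mu by (intro sum_mono mult_left_mono emeasure_mono) auto
  also have "\<dots> = emeasure \<mu> {x. e / a < infdist x F}"
    by (simp add: sum_distrib_right[symmetric] sum_weights)
  finally show ?thesis by (simp add: emeasure_eq_measure)
qed

lemma measure_far_from_attractor_eq_0:
  assumes e: "0 < e"
  shows "measure \<mu> {x. e < infdist x F} = 0"
proof -
  interpret prob_space \<mu> by (rule prob_space_mu)
  obtain a where a: "0 < a" "a < 1" "\<And>i. i < l \<Longrightarrow> \<alpha> i \<le> a" by (rule max_ratio) blast
  define V where "V n = {x. e / a ^ n < infdist x F}" for n
  have V_sets: "range V \<subseteq> sets \<mu>"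
    using sets_mu by (auto simp: V_def intro!: borel_open open_Collect_less continuous_intros)
  have le: "measure \<mu> {x. e < infdist x F} \<le> measure \<mu> (V n)" for n
  proof (induction n)
    case (Suc n)
    have "measure \<mu> (V n) \<le> measure \<mu> {x. e / a ^ n / a < infdist x F}"
      unfolding V_def using e a by (intro measure_far_from_attractor_le) auto
    then show ?case using Suc by (simp add: V_def field_simps)
  qed (simp add: V_def)
  have "decseq V"
  proof (rule decseq_SucI)
    fix n
    have "e / a ^ n \<le> e / a ^ Suc n"
      using e a by (intro divide_left_mono) (auto simp: mult_left_le_one_le)
    then show "V (Suc n) \<subseteq> V n" unfolding V_def by auto
  qed
  moreover have "(\<Inter>n. V n) = {}"
  proof (rule equals0I)
    fix x assume x: "x \<in> (\<Inter>n. V n)"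
    have "0 < e / (infdist x F + 1)" using e infdist_nonneg[of x F] by simp
    then obtain n where "a ^ n < e / (infdist x F + 1)" using real_arch_pow_inv a by blast
    then have "infdist x F + 1 < e / a ^ n" using a infdist_nonneg[of x F] by (simp add: field_simps)
    moreover have "e / a ^ n < infdist x F" using x unfolding V_def by auto
    ultimately show False by simp
  qed
  ultimately have "(\<lambda>n. measure \<mu> (V n)) \<longlonglongrightarrow> 0"
    using finite_Lim_measure_decseq[OF V_sets] by simp
  then have "measure \<mu> {x. e < infdist x F} \<le> 0" using le by (intro LIMSEQ_le_const) auto
  then show ?thesis using measure_nonneg[of \<mu> "{x. e < infdist x F}"] by linarith
qed

lemma AE_in_attractor: "AE x in \<mu>. x \<in> F"
proof -
  interpret prob_space \<mu> by (rule prob_space_mu)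
  have "AE x in \<mu>. x \<notin> {x. 1 / real (Suc n) < infdist x F}" for n
  proof (rule AE_I')
    show "{x. 1 / real (Suc n) < infdist x F} \<in> null_sets \<mu>"
      using measure_far_from_attractor_eq_0[of "1 / real (Suc n)"] sets_mu emeasure_eq_measure
      by (auto simp: null_sets_def intro!: borel_open open_Collect_less continuous_intros)
  qed auto
  then have "AE x in \<mu>. \<forall>n. infdist x F \<le> 1 / real (Suc n)"
    by (simp add: AE_all_countable not_less)
  then show ?thesis
  proof (rule eventually_mono)
    fix x assume small: "\<forall>n. infdist x F \<le> 1 / real (Suc n)"
    have "infdist x F \<le> 0"
    proof (rule field_le_epsilon)
      fix e :: real assume "0 < e"
      then obtain n where "inverse (real (Suc n)) < e" using reals_Archimedean by blast
      then show "infdist x F \<le> 0 + e" using small[rule_format, of n] by (simp add: inverse_eq_divide)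
    qed
    then show "x \<in> F"
      using infdist_pos_not_in_closed[OF closed_attractor attractor_nonempty] by force
  qed
qed

end

locale ssc_attractor = ifs_attractor +
  assumes ssc: "SSC l \<alpha> Orth t F"
begin

lemma pieces_separated:
  obtains \<delta> where "0 < \<delta>"
    "\<And>i j x y. i < l \<Longrightarrow> j < l \<Longrightarrow> i \<noteq> j \<Longrightarrow> x \<in> F \<Longrightarrow> y \<in> F \<Longrightarrow> \<delta> \<le> dist (\<phi> i x) (\<phi> j y)"
proof
  let ?D = "(\<lambda>(i, j). setdist (\<phi> i ` F) (\<phi> j ` F)) ` {(i, j). i < l \<and> j < l \<and> i \<noteq> j}"
  have "finite {(i, j). i < l \<and> j < l \<and> i \<noteq> j}"
    by (rule finite_subset[of _ "{..<l} \<times> {..<l}"]) auto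
  then have fin: "finite ?D" by simp
  have "(0, 1) \<in> {(i, j). i < l \<and> j < (l::nat) \<and> i \<noteq> j}" using two_le_l by auto
  then have ne: "?D \<noteq> {}" by blast
  have "setdist (\<phi> i ` F) (\<phi> j ` F) > 0" if "i < l" "j < l" "i \<noteq> j" for i j
    using ssc that attractor_nonempty compact_piece compact_imp_closed[OF compact_piece]
    by (subst setdist_gt_0_compact_closed) (auto simp: SSC_def)
  then show "0 < Min ?D" using fin ne by (auto simp: Min_gr_iff)
  fix i j x y assume "i < l" "j < l" "i \<noteq> j" "x \<in> F" "y \<in> F"
  then have "Min ?D \<le> setdist (\<phi> i ` F) (\<phi> j ` F)" using fin by (intro Min_le) auto
  also have "\<dots> \<le> dist (\<phi> i x) (\<phi> j y)" using \<open>x \<in> F\<close> \<open>y \<in> F\<close> by (intro setdist_le_dist) auto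
  finally show "Min ?D \<le> dist (\<phi> i x) (\<phi> j y)" .
qed

lemma connected_subset_piece:
  assumes S: "connected S" "S \<noteq> {}" "S \<subseteq> F"
  obtains i where "i < l" "S \<subseteq> \<phi> i ` F"
proof -
  obtain x where "x \<in> S" using S(2) by blast
  then obtain i where i: "i < l" "x \<in> \<phi> i ` F" using S(3) attractor_eq by blast
  let ?A = "\<phi> i ` F" and ?B = "\<Union>j\<in>{j. j < l \<and> j \<noteq> i}. \<phi> j ` F"
  have "?A \<inter> \<phi> j ` F = {}" if "j < l" "j \<noteq> i" for j
    using ssc i(1) that unfolding SSC_def by metis
  then have "?A \<inter> ?B \<inter> S = {}" by blast
  moreover have "S \<subseteq> ?A \<union> ?B" using S(3) attractor_eq by blast
  moreover have "closed ?B" using compact_piece by (intro closed_UN compact_imp_closed) auto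
  ultimately have "?A \<inter> S = {} \<or> ?B \<inter> S = {}"
    using connected_closedD[OF S(1)] compact_imp_closed[OF compact_piece] by presburger
  then have "?B \<inter> S = {}" using \<open>x \<in> S\<close> i(2) by blast
  then have "S \<subseteq> ?A" using \<open>S \<subseteq> ?A \<union> ?B\<close> by blast
  then show ?thesis using that i(1) by blast
qed

lemma segment_in_attractor_blow_up:
  assumes L: "0 < L" and w: "norm w = 1" and seg: "\<And>u. \<bar>u\<bar> \<le> L \<Longrightarrow> z + u *\<^sub>R w \<in> F"
    and a: "0 < a" "\<And>i. i < l \<Longrightarrow> \<alpha> i \<le> a"
  obtains z' w' where "norm w' = 1" "\<And>u. \<bar>u\<bar> \<le> L / a \<Longrightarrow> z' + u *\<^sub>R w' \<in> F"
proof -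
  let ?S = "(\<lambda>u. z + u *\<^sub>R w) ` {-L..L}"
  have "connected ?S" by (intro connected_continuous_image continuous_intros) simp
  moreover have "?S \<noteq> {}" "?S \<subseteq> F" using L seg by auto
  ultimately obtain i where i: "i < l" "?S \<subseteq> \<phi> i ` F" by (rule connected_subset_piece)
  obtain y where y: "\<phi> i y = z" using sim_map_surj[OF i(1)] by blast
  let ?w = "transpose (Orth i) *v w"
  have Ow: "Orth i *v ?w = w" by (rule orthogonal_matrix_right_inverse[OF orthogonal_Orth[OF i(1)]])
  have "y + u *\<^sub>R ?w \<in> F" if u: "\<bar>u\<bar> \<le> L / a" for u
  proof -
    have "\<bar>\<alpha> i * u\<bar> = \<alpha> i * \<bar>u\<bar>" using ratio_pos[OF i(1)] by (simp add: abs_mult)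
    also have "\<dots> \<le> a * (L / a)" using a(2)[OF i(1)] ratio_pos[OF i(1)] u by (intro mult_mono) auto
    finally have "\<alpha> i * u \<in> {-L..L}" using a(1) by (simp add: abs_le_iff)
    then have "z + (\<alpha> i * u) *\<^sub>R w \<in> \<phi> i ` F" using i(2) by blast
    moreover have "\<phi> i (y + u *\<^sub>R ?w) = z + (\<alpha> i * u) *\<^sub>R w" by (simp only: sim_map_line y Ow)
    ultimately have "\<phi> i (y + u *\<^sub>R ?w) \<in> \<phi> i ` F" by simp
    then show ?thesis using sim_map_inj[OF i(1)] by blast
  qed
  moreover have "norm ?w = 1"
    using w orthogonal_matrix_norm[of "transpose (Orth i)" w] orthogonal_Orth[OF i(1)] by simp
  ultimately show ?thesis using that by blast
qed

lemma no_segment_in_attractor: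
  assumes L: "0 < L" and w: "norm w = 1"
  shows "\<exists>u. \<bar>u\<bar> \<le> L \<and> z + u *\<^sub>R w \<notin> F"
proof (rule ccontr)
  assume "\<not> ?thesis"
  then have seg: "\<And>u. \<bar>u\<bar> \<le> L \<Longrightarrow> z + u *\<^sub>R w \<in> F" by blast
  obtain a where a: "0 < a" "a < 1" "\<And>i. i < l \<Longrightarrow> \<alpha> i \<le> a" by (rule max_ratio) blast
  obtain B where B: "0 < B" "\<And>x. x \<in> F \<Longrightarrow> norm x \<le> B" by (rule attractor_norm_bound) blast
  have long: "\<exists>z w. norm w = 1 \<and> (\<forall>u. \<bar>u\<bar> \<le> L / a ^ n \<longrightarrow> z + u *\<^sub>R w \<in> F)" for n
  proof (induction n)
    case 0 then show ?case using seg w by auto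
  next
    case (Suc n)
    then obtain z w where "norm w = 1" "\<And>u. \<bar>u\<bar> \<le> L / a ^ n \<Longrightarrow> z + u *\<^sub>R w \<in> F" by blast
    moreover have "0 < L / a ^ n" using L a by simp
    ultimately obtain z' w' where "norm w' = 1" "\<And>u. \<bar>u\<bar> \<le> L / a ^ n / a \<Longrightarrow> z' + u *\<^sub>R w' \<in> F"
      using segment_in_attractor_blow_up a(1,3) by metis
    then show ?case unfolding power_Suc2 divide_divide_eq_left by blast
  qed
  obtain n where "a ^ n < L / B" using real_arch_pow_inv[of "L / B" a] L B a by auto
  then have R: "B < L / a ^ n" using B a by (simp add: field_simps)
  then obtain z w where w: "norm w = 1" and seg: "\<And>u. \<bar>u\<bar> \<le> L / a ^ n \<Longrightarrow> z + u *\<^sub>R w \<in> F"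
    using long by blast
  let ?R = "L / a ^ n"
  have "2 * ?R = norm ((z + ?R *\<^sub>R w) - (z + (- ?R) *\<^sub>R w))"
    using w L a by (simp add: scaleR_left_distrib[symmetric] del: scaleR_left_distrib)
  also have "\<dots> \<le> norm (z + ?R *\<^sub>R w) + norm (z + (- ?R) *\<^sub>R w)" by (rule norm_triangle_ineq4)
  also have "\<dots> \<le> 2 * B" using B(2)[OF seg[of ?R]] B(2)[OF seg[of "- ?R"]] L a by simp
  finally show False using R by simp
qed

end

section \<open>Porous subsets of the real line\<close>

definition porous_at :: "real \<Rightarrow> real \<Rightarrow> real set \<Rightarrow> bool" where
  "porous_at c r E \<longleftrightarrow> (\<forall>x. \<exists>b. 0 \<le> b \<and> b + c * r \<le> r \<and> {x + b .. x + b + c * r} \<inter> E = {})"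

definition grid_cells :: "real set \<Rightarrow> real \<Rightarrow> int set" where
  "grid_cells E s = {j. \<exists>u\<in>E. of_int j \<le> u * s \<and> u * s \<le> of_int j + 1}"

lemma finite_grid_cells:
  assumes "bounded E"
  shows "finite (grid_cells E s)"
proof -
  obtain K where K: "\<And>u. u \<in> E \<Longrightarrow> \<bar>u\<bar> \<le> K" using assms by (auto simp: bounded_real)
  have "grid_cells E s \<subseteq> {\<lfloor>- K * \<bar>s\<bar>\<rfloor> - 1 .. \<lceil>K * \<bar>s\<bar>\<rceil>}"
  proof
    fix j assume "j \<in> grid_cells E s"
    then obtain u where u: "u \<in> E" "of_int j \<le> u * s" "u * s \<le> of_int j + 1"
      unfolding grid_cells_def by blast
    have "\<bar>u * s\<bar> \<le> K * \<bar>s\<bar>" using K[OF u(1)] by (simp add: abs_mult mult_right_mono)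
    then show "j \<in> {\<lfloor>- K * \<bar>s\<bar>\<rfloor> - 1 .. \<lceil>K * \<bar>s\<bar>\<rceil>}" using u(2,3) by simp linarith
  qed
  then show ?thesis by (rule finite_subset) simp
qed

lemma grid_cells_cover:
  assumes "u \<in> E" "0 < s"
  shows "\<lfloor>u * s\<rfloor> \<in> grid_cells E s" "\<bar>u - of_int \<lfloor>u * s\<rfloor> / s\<bar> \<le> 1 / s"
proof -
  have j: "of_int \<lfloor>u * s\<rfloor> \<le> u * s" "u * s \<le> of_int \<lfloor>u * s\<rfloor> + 1" by linarith+
  then show "\<lfloor>u * s\<rfloor> \<in> grid_cells E s" using assms(1) unfolding grid_cells_def by blast
  have "of_int \<lfloor>u * s\<rfloor> / s \<le> u" "u \<le> of_int \<lfloor>u * s\<rfloor> / s + 1 / s"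
    using j assms(2) by (simp_all add: field_simps)
  then show "\<bar>u - of_int \<lfloor>u * s\<rfloor> / s\<bar> \<le> 1 / s" by simp
qed

lemma grid_cells_parent:
  assumes M: "0 < M" and j: "j \<in> grid_cells E (s * real M)"
  shows "j div int M \<in> grid_cells E s"
proof -
  obtain u where u: "u \<in> E" "of_int j \<le> u * (s * real M)" "u * (s * real M) \<le> of_int j + 1"
    using j unfolding grid_cells_def by blast
  let ?p = "j div int M"
  have "?p * int M \<le> j" "j + 1 \<le> ?p * int M + int M"
    using M div_mult_mod_eq[of j "int M"] pos_mod_bound[of "int M" j] pos_mod_sign[of "int M" j]
    by linarith+
  then have "real_of_int (?p * int M) \<le> of_int j" "real_of_int (j + 1) \<le> of_int (?p * int M + int M)"
    by (simp_all only: of_int_le_iff)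
  then have "of_int ?p * real M \<le> of_int j" "of_int j + 1 \<le> (of_int ?p + 1) * real M"
    by (simp_all add: distrib_right)
  then have "of_int ?p * real M \<le> (u * s) * real M" "(u * s) * real M \<le> (of_int ?p + 1) * real M"
    using u(2,3) by (simp_all add: mult.assoc)
  then have "of_int ?p \<le> u * s" "u * s \<le> of_int ?p + 1" using M by simp_all
  then show ?thesis using u(1) unfolding grid_cells_def by blast
qed

lemma grid_cells_missing_child:
  assumes s: "0 < s" and M: "2 \<le> c * real M" and porous: "porous_at c (1 / s) E"
    and j: "j \<in> grid_cells E s"
  shows "\<exists>e \<in> {j * int M .. j * int M + int M - 1}. e \<notin> grid_cells E (s * real M)"
proof -
  obtain b where b: "0 \<le> b" "b + c * (1 / s) \<le> 1 / s"
    and gap: "{of_int j / s + b .. of_int j / s + b + c * (1 / s)} \<inter> E = {}"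
    using porous unfolding porous_at_def by blast
  have Mpos: "0 < real M" using M b s by (cases "M = 0") auto
  \<comment> \<open>The child cell at the left end of the gap lies inside it, since the gap has length \<open>c / s \<ge> 2 / (s M)\<close>.\<close>
  define d where "d = \<lceil>b * s * real M\<rceil>"
  have "(b + c * (1 / s)) * s \<le> (1 / s) * s" using b(2) s by (intro mult_right_mono) auto
  then have "b * s \<le> 1 - c" using s by (simp add: algebra_simps)
  then have "b * s * real M \<le> (1 - c) * real M" by (intro mult_right_mono) auto
  also have "\<dots> \<le> real M - 2" using M by (simp add: algebra_simps)
  finally have "b * s * real M \<le> real M - 2" .
  moreover have "0 \<le> b * s * real M" using b(1) s Mpos by simp
  ultimately have d: "0 \<le> d" "d \<le> int M - 2" unfolding d_def by (simp_all add: ceiling_le_iff)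
  have "j * int M + d \<notin> grid_cells E (s * real M)"
  proof
    assume "j * int M + d \<in> grid_cells E (s * real M)"
    then obtain u where u: "u \<in> E" "of_int (j * int M + d) \<le> u * (s * real M)"
      "u * (s * real M) \<le> of_int (j * int M + d) + 1"
      unfolding grid_cells_def by blast
    have "b * s * real M \<le> of_int d" "of_int d \<le> b * s * real M + 1"
      unfolding d_def by linarith+
    moreover have "(of_int j / s + b) * (s * real M) = of_int j * real M + b * s * real M"
      "(of_int j / s + b + c * (1 / s)) * (s * real M) = of_int j * real M + b * s * real M + c * real M"
      using s by (simp_all add: field_simps)
    moreover have "real_of_int (j * int M + d) = of_int j * real M + of_int d" by simp
    ultimately have "(of_int j / s + b) * (s * real M) \<le> u * (s * real M)"
      "u * (s * real M) \<le> (of_int j / s + b + c * (1 / s)) * (s * real M)"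
      using u(2,3) M by linarith+
    then have "u \<in> {of_int j / s + b .. of_int j / s + b + c * (1 / s)}"
      using s Mpos by (simp add: mult_le_cancel_right_pos)
    then show False using gap u(1) by blast
  qed
  moreover have "j * int M + d \<in> {j * int M .. j * int M + int M - 1}" using d by simp
  ultimately show ?thesis by blast
qed

lemma card_grid_cells_refine:
  assumes E: "bounded E" and s: "0 < s" and M: "2 \<le> c * real M" and porous: "porous_at c (1 / s) E"
  shows "card (grid_cells E (s * real M)) \<le> (M - 1) * card (grid_cells E s)"
proof -
  have M0: "0 < M" using M by (cases "M = 0") auto
  let ?children = "\<lambda>j. {j * int M .. j * int M + int M - 1}"
  obtain e where e: "\<And>j. j \<in> grid_cells E s \<Longrightarrow> e j \<in> ?children j"
    "\<And>j. j \<in> grid_cells E s \<Longrightarrow> e j \<notin> grid_cells E (s * real M)"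
    using grid_cells_missing_child[OF s M porous] by metis
  have "grid_cells E (s * real M) \<subseteq> (\<Union>j\<in>grid_cells E s. ?children j - {e j})"
  proof
    fix j' assume j': "j' \<in> grid_cells E (s * real M)"
    let ?p = "j' div int M"
    have p: "?p \<in> grid_cells E s" by (rule grid_cells_parent[OF M0 j'])
    have "?p * int M \<le> j'" "j' \<le> ?p * int M + int M - 1"
      using M0 div_mult_mod_eq[of j' "int M"] pos_mod_bound[of "int M" j'] pos_mod_sign[of "int M" j']
      by linarith+
    then have "j' \<in> ?children ?p - {e ?p}" using e(2)[OF p] j' by auto
    then show "j' \<in> (\<Union>j\<in>grid_cells E s. ?children j - {e j})" using p by blast
  qed
  then have "card (grid_cells E (s * real M)) \<le> card (\<Union>j\<in>grid_cells E s. ?children j - {e j})"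
    by (rule card_mono[rotated]) (simp add: finite_grid_cells[OF E])
  also have "\<dots> \<le> (\<Sum>j\<in>grid_cells E s. card (?children j - {e j}))"
    by (rule card_UN_le[OF finite_grid_cells[OF E]])
  also have "\<dots> = (\<Sum>j\<in>grid_cells E s. M - 1)"
  proof (rule sum.cong)
    fix j assume "j \<in> grid_cells E s"
    then show "card (?children j - {e j}) = M - 1" using e(1) by (simp add: card_Diff_singleton)
  qed simp
  finally show ?thesis by (simp add: mult.commute)
qed

lemma porous_set_covering:
  fixes E :: "real set"
  assumes E: "bounded E" and c: "0 < c" and r0: "0 < r0"
    and porous: "\<And>r. 0 < r \<Longrightarrow> r \<le> r0 \<Longrightarrow> porous_at c r E"
  obtains M :: nat and A k0 where "2 \<le> M" "0 \<le> A"
    "\<And>k. k0 \<le> k \<Longrightarrow> \<exists>C. finite C \<and> real (card C) \<le> A * (real M - 1) ^ k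
        \<and> (\<forall>u\<in>E. \<exists>p\<in>C. \<bar>u - p\<bar> \<le> 1 / real M ^ k)"
proof -
  define M where "M = nat \<lceil>2 / c\<rceil> + 2"
  have M2: "2 \<le> M" by (simp add: M_def)
  have "2 / c \<le> real M" unfolding M_def by linarith
  then have cM: "2 \<le> c * real M" using c by (simp add: field_simps)
  obtain k0 where k0: "(1 / real M) ^ k0 < r0" using real_arch_pow_inv[OF r0, of "1 / real M"] M2 by auto
  let ?cells = "\<lambda>k. grid_cells E (real M ^ k)"
  have step: "card (?cells (Suc k)) \<le> (M - 1) * card (?cells k)" if "k0 \<le> k" for k
  proof -
    have "(1 / real M) ^ k \<le> (1 / real M) ^ k0" using that M2 by (intro power_decreasing) auto
    then have "porous_at c (1 / real M ^ k) E" using k0 M2 by (intro porous) (auto simp: power_one_over)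
    then have "card (grid_cells E (real M ^ k * real M)) \<le> (M - 1) * card (?cells k)"
      using M2 by (intro card_grid_cells_refine[OF E _ cM]) auto
    then show ?thesis by (simp only: power_Suc2)
  qed
  have growth: "card (?cells (k0 + n)) \<le> card (?cells k0) * (M - 1) ^ n" for n
  proof (induction n)
    case (Suc n)
    have "card (?cells (k0 + Suc n)) \<le> (M - 1) * card (?cells (k0 + n))" using step[of "k0 + n"] by simp
    also have "\<dots> \<le> (M - 1) * (card (?cells k0) * (M - 1) ^ n)" using Suc by simp
    finally show ?case by (simp add: algebra_simps)
  qed simp
  show ?thesis
  proof (rule that[OF M2, of "real (card (?cells k0))" k0])
    fix k assume k: "k0 \<le> k"
    define C where "C = (\<lambda>j. of_int j / real M ^ k) ` ?cells k"
    have "card C \<le> card (?cells k)" unfolding C_def by (rule card_image_le[OF finite_grid_cells[OF E]])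
    also have "\<dots> \<le> card (?cells k0) * (M - 1) ^ (k - k0)" using growth[of "k - k0"] k by simp
    also have "\<dots> \<le> card (?cells k0) * (M - 1) ^ k" using M2 by (intro mult_left_mono power_increasing) auto
    finally have "real (card C) \<le> real (card (?cells k0) * (M - 1) ^ k)" by (simp only: of_nat_le_iff)
    then have "real (card C) \<le> real (card (?cells k0)) * (real M - 1) ^ k" using M2 by (simp add: of_nat_diff)
    moreover have "\<exists>p\<in>C. \<bar>u - p\<bar> \<le> 1 / real M ^ k" if "u \<in> E" for u
      using grid_cells_cover[OF that, of "real M ^ k"] M2 unfolding C_def by auto
    ultimately show "\<exists>C. finite C \<and> real (card C) \<le> real (card (?cells k0)) * (real M - 1) ^ k
        \<and> (\<forall>u\<in>E. \<exists>p\<in>C. \<bar>u - p\<bar> \<le> 1 / real M ^ k)"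
      using finite_grid_cells[OF E] unfolding C_def by blast
  qed simp
qed

section \<open>Porosity of the slices of a separated attractor\<close>

locale ssc_axis = ssc_attractor +
  fixes v :: "real^2"
  assumes unit_axis: "norm v = 1"
    and Orth_axis: "\<And>i. i < l \<Longrightarrow> \<exists>s\<in>{1, -1}. Orth i *v v = s *\<^sub>R v"
begin

definition axis_sign :: "nat \<Rightarrow> real" where
  "axis_sign i = (SOME s. s \<in> {1, -1} \<and> Orth i *v v = s *\<^sub>R v)"

lemma axis_sign:
  assumes "i < l"
  shows "axis_sign i \<in> {1, -1} \<and> Orth i *v v = axis_sign i *\<^sub>R v"
proof -
  have "\<exists>s. s \<in> {1, -1} \<and> Orth i *v v = s *\<^sub>R v" using Orth_axis[OF assms] by blast
  then show ?thesis unfolding axis_sign_def by (rule someI_ex)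
qed

lemma sim_map_axis: "i < l \<Longrightarrow> \<phi> i (y + s *\<^sub>R v) = \<phi> i y + (\<alpha> i * axis_sign i * s) *\<^sub>R v"
  using sim_map_line[of i y s v] axis_sign[of i] by (simp add: mult.commute mult.left_commute)

definition slice :: "real^2 \<Rightarrow> real set" where
  "slice z = {u. z + u *\<^sub>R v \<in> F}"

lemma bounded_slice: "bounded (slice z)"
proof -
  obtain B where B: "\<And>x. x \<in> F \<Longrightarrow> norm x \<le> B" using attractor_norm_bound by blast
  have "\<bar>u\<bar> \<le> B + norm z" if "u \<in> slice z" for u
  proof -
    have "\<bar>u\<bar> = norm ((z + u *\<^sub>R v) - z)" using unit_axis by simp
    also have "\<dots> \<le> norm (z + u *\<^sub>R v) + norm z" by (rule norm_triangle_ineq4)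
    finally show ?thesis using B that by (force simp: slice_def)
  qed
  then show ?thesis unfolding bounded_real by blast
qed

lemma dist_along_axis: "dist (z + a *\<^sub>R v) (z + b *\<^sub>R v) = \<bar>a - b\<bar>"
proof -
  have "(z + a *\<^sub>R v) - (z + b *\<^sub>R v) = (a - b) *\<^sub>R v" by (simp add: algebra_simps)
  then show ?thesis using unit_axis by (simp add: dist_norm)
qed

lemma mem_slice_shift: "u \<in> slice (z + x *\<^sub>R v) \<longleftrightarrow> x + u \<in> slice z"
  by (simp add: slice_def algebra_simps scaleR_left_distrib)

lemma mem_slice_limit:
  assumes "Z \<longlonglongrightarrow> z" "U \<longlonglongrightarrow> u" "\<And>n. U n \<in> slice (Z n)"
  shows "u \<in> slice z"
proof -
  have "(\<lambda>n. Z n + U n *\<^sub>R v) \<longlonglongrightarrow> z + u *\<^sub>R v" using assms(1,2) by (intro tendsto_intros)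
  moreover have "Z n + U n *\<^sub>R v \<in> F" for n using assms(3) by (simp add: slice_def)
  ultimately have "z + u *\<^sub>R v \<in> F"
    using closed_sequentially[OF closed_attractor, of "\<lambda>n. Z n + U n *\<^sub>R v"] by blast
  then show ?thesis by (simp add: slice_def)
qed

lemma mem_slice_limit_of_dense_windows:
  assumes "Z \<longlonglongrightarrow> z" "g \<longlonglongrightarrow> 0" "\<And>n. g n \<le> lam"
    and meets: "\<And>n b. 0 \<le> b \<Longrightarrow> b + g n \<le> lam \<Longrightarrow> {b .. b + g n} \<inter> slice (Z n) \<noteq> {}"
    and u: "0 \<le> u" "u \<le> lam"
  shows "u \<in> slice z"
proof -
  have "\<exists>w. \<bar>w - u\<bar> \<le> g n \<and> w \<in> slice (Z n)" for n
  proof -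
    let ?b = "min u (lam - g n)"
    have "{?b .. ?b + g n} \<inter> slice (Z n) \<noteq> {}" using meets[of ?b n] u assms(3)[of n] by simp
    then obtain w where "w \<in> {?b .. ?b + g n}" "w \<in> slice (Z n)" by blast
    then show ?thesis using u by (intro exI[of _ w]) (auto simp: min_def split: if_splits)
  qed
  then obtain W where W: "\<And>n. \<bar>W n - u\<bar> \<le> g n" "\<And>n. W n \<in> slice (Z n)" by metis
  have "(\<lambda>n. W n - u) \<longlonglongrightarrow> 0" using W(1) by (intro Lim_null_comparison[OF _ assms(2)]) simp
  then have "W \<longlonglongrightarrow> u" by (simp add: LIM_zero_iff)
  then show ?thesis using mem_slice_limit assms(1) W(2) by blast
qed

lemma uniform_slice_gap:
  assumes lam: "0 < lam"
  obtains g where "0 < g" "g \<le> lam" "\<And>z. \<exists>b. 0 \<le> b \<and> b + g \<le> lam \<and> {b .. b + g} \<inter> slice z = {}"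
proof (rule ccontr)
  assume no_gap: \<open>\<not> thesis\<close>
  define gs where "gs n = lam / real (Suc n)" for n
  have gs: "0 < gs n" "gs n \<le> lam" for n using lam by (auto simp: gs_def field_simps)
  have "\<exists>z. \<forall>b. 0 \<le> b \<and> b + gs n \<le> lam \<longrightarrow> {b .. b + gs n} \<inter> slice z \<noteq> {}" for n
  proof (rule ccontr)
    assume "\<not> ?thesis"
    then have "\<And>z. \<exists>b. 0 \<le> b \<and> b + gs n \<le> lam \<and> {b .. b + gs n} \<inter> slice z = {}" by blast
    then show False using no_gap that gs[of n] by blast
  qed
  then obtain Z where Z: "\<And>n b. 0 \<le> b \<Longrightarrow> b + gs n \<le> lam \<Longrightarrow> {b .. b + gs n} \<inter> slice (Z n) \<noteq> {}"
    by metis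
  obtain B where B: "\<And>x. x \<in> F \<Longrightarrow> norm x \<le> B" using attractor_norm_bound by blast
  have "Z n \<in> cball 0 (B + lam)" for n
  proof -
    have "{0 .. 0 + gs n} \<inter> slice (Z n) \<noteq> {}" using Z[of 0 n] gs[of n] by simp
    then obtain u where "u \<in> {0 .. 0 + gs n}" "u \<in> slice (Z n)" by blast
    then have u: "0 \<le> u" "u \<le> lam" "Z n + u *\<^sub>R v \<in> F" using gs[of n] by (auto simp: slice_def)
    have "norm (Z n) \<le> norm (Z n + u *\<^sub>R v) + norm (u *\<^sub>R v)"
      using norm_triangle_ineq4[of "Z n + u *\<^sub>R v" "u *\<^sub>R v"] by simp
    then show ?thesis using B[OF u(3)] u(1,2) unit_axis by simp
  qed
  then obtain z0 r where r: "strict_mono r" "(Z \<circ> r) \<longlonglongrightarrow> z0"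
    using compact_imp_seq_compact[OF compact_cball] unfolding seq_compact_def by metis
  have "gs \<longlonglongrightarrow> 0" unfolding gs_def[abs_def] using LIMSEQ_Suc[OF lim_const_over_n[of lam]] by simp
  then have gs_r: "(gs \<circ> r) \<longlonglongrightarrow> 0" using LIMSEQ_subseq_LIMSEQ[OF _ r(1)] by blast
  have "u \<in> slice z0" if "0 \<le> u" "u \<le> lam" for u
    by (rule mem_slice_limit_of_dense_windows[OF r(2) gs_r]) (use Z gs(2) that in auto)
  then have "\<bar>w\<bar> \<le> lam / 2 \<Longrightarrow> (z0 + (lam / 2) *\<^sub>R v) + w *\<^sub>R v \<in> F" for w
    by (simp add: slice_def algebra_simps flip: scaleR_add_left)
  then show False using no_segment_in_attractor[of "lam / 2" v] lam unit_axis by fastforce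
qed

definition slices_porous_at :: "real \<Rightarrow> real \<Rightarrow> bool" where
  "slices_porous_at c r \<longleftrightarrow> (\<forall>z. \<exists>b. 0 \<le> b \<and> b + c * r \<le> r \<and> {b .. b + c * r} \<inter> slice z = {})"

lemma porous_at_slice:
  assumes "slices_porous_at c r"
  shows "porous_at c r (slice z)"
  unfolding porous_at_def
proof
  fix x
  obtain b where b: "0 \<le> b" "b + c * r \<le> r" "{b .. b + c * r} \<inter> slice (z + x *\<^sub>R v) = {}"
    using assms unfolding slices_porous_at_def by blast
  have "{x + b .. x + b + c * r} \<inter> slice z = {}"
  proof (rule equals0I)
    fix u assume "u \<in> {x + b .. x + b + c * r} \<inter> slice z"
    then have "u - x \<in> {b .. b + c * r} \<inter> slice (z + x *\<^sub>R v)" by (auto simp: mem_slice_shift)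
    then show False using b(3) by blast
  qed
  then show "\<exists>b. 0 \<le> b \<and> b + c * r \<le> r \<and> {x + b .. x + b + c * r} \<inter> slice z = {}" using b by blast
qed

lemma slice_gap_through_piece:
  assumes i: "i < l" and porous: "slices_porous_at c (r / \<alpha> i)"
    and within: "\<And>u. u \<in> {0 .. r} \<Longrightarrow> u \<in> slice z \<Longrightarrow> z + u *\<^sub>R v \<in> \<phi> i ` F"
  shows "\<exists>b. 0 \<le> b \<and> b + c * r \<le> r \<and> {b .. b + c * r} \<inter> slice z = {}"
proof -
  let ?a = "\<alpha> i" and ?s = "axis_sign i"
  have a: "0 < ?a" by (rule ratio_pos[OF i])
  have sign: "?s = 1 \<or> ?s = -1" using axis_sign[OF i] by auto
  \<comment> \<open>If \<open>\<phi> i\<close> reverses the axis, the window is pulled back from its right end \<open>z + r v\<close>.\<close>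
  define e where "e = (if ?s = 1 then 0 else r)"
  obtain y where y: "\<phi> i y = z + e *\<^sub>R v" using sim_map_surj[OF i] by blast
  have image: "\<phi> i (y + s *\<^sub>R v) = z + (e + ?a * ?s * s) *\<^sub>R v" for s
    by (simp add: sim_map_axis[OF i] y scaleR_add_left)
  obtain b' where b': "0 \<le> b'" "b' + c * (r / ?a) \<le> r / ?a" and gap: "{b' .. b' + c * (r / ?a)} \<inter> slice y = {}"
    using porous unfolding slices_porous_at_def by blast
  have scaled: "?a * b' + c * r \<le> r"
    using mult_left_mono[OF b'(2), of ?a] a by (simp add: distrib_left)
  define b where "b = (if ?s = 1 then ?a * b' else r - ?a * b' - c * r)"
  have b: "0 \<le> b" "b + c * r \<le> r" using sign scaled b'(1) a by (auto simp: b_def)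
  have "{b .. b + c * r} \<inter> slice z = {}"
  proof (rule equals0I)
    fix u assume u: "u \<in> {b .. b + c * r} \<inter> slice z"
    define s where "s = (u - e) / (?a * ?s)"
    have us: "e + ?a * ?s * s = u" using a sign by (auto simp: s_def)
    have as: "?a * s = (if ?s = 1 then u else r - u)" using a sign by (auto simp: s_def e_def field_simps)
    have "?a * b' \<le> ?a * s" "?a * s \<le> ?a * (b' + c * (r / ?a))"
      using u as a sign by (auto simp: b_def distrib_left)
    then have "s \<in> {b' .. b' + c * (r / ?a)}" using a by simp
    then have "y + s *\<^sub>R v \<notin> F" using gap by (auto simp: slice_def)
    moreover have "u \<in> {0 .. r}" using u b by auto
    then obtain w where "w \<in> F" "z + u *\<^sub>R v = \<phi> i w" using within u unfolding slice_def by blast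
    then have "y + s *\<^sub>R v \<in> F" using sim_map_inj[OF i] image[of s] us by metis
    ultimately show False by blast
  qed
  then show ?thesis using b by blast
qed

lemma slices_porous_at_scale_down:
  assumes \<delta>: "\<And>i j x y. i < l \<Longrightarrow> j < l \<Longrightarrow> i \<noteq> j \<Longrightarrow> x \<in> F \<Longrightarrow> y \<in> F \<Longrightarrow> \<delta> \<le> dist (\<phi> i x) (\<phi> j y)"
    and r: "0 < r" "r < \<delta>" and c: "c \<le> 1"
    and porous: "\<And>i. i < l \<Longrightarrow> slices_porous_at c (r / \<alpha> i)"
  shows "slices_porous_at c r"
  unfolding slices_porous_at_def
proof
  fix z
  show "\<exists>b. 0 \<le> b \<and> b + c * r \<le> r \<and> {b .. b + c * r} \<inter> slice z = {}"
  proof (cases "{0 .. r} \<inter> slice z = {}")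
    case True
    have "c * r \<le> r" using c r by (simp add: mult_left_le_one_le)
    then have "{0 .. 0 + c * r} \<subseteq> {0 .. r}" by auto
    then have "{0 .. 0 + c * r} \<inter> slice z = {}" using True by blast
    then show ?thesis using \<open>c * r \<le> r\<close> by (intro exI[of _ 0]) simp
  next
    case False
    then obtain u0 where u0: "u0 \<in> {0 .. r}" "z + u0 *\<^sub>R v \<in> F" unfolding slice_def by blast
    obtain i w0 where i: "i < l" "w0 \<in> F" "z + u0 *\<^sub>R v = \<phi> i w0" using attractor_piece[OF u0(2)] by blast
    have "z + u *\<^sub>R v \<in> \<phi> i ` F" if u: "u \<in> {0 .. r}" "u \<in> slice z" for u
    proof -
      obtain j w where j: "j < l" "w \<in> F" "z + u *\<^sub>R v = \<phi> j w"
        using attractor_piece u(2) unfolding slice_def by blast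
      have "dist (\<phi> i w0) (\<phi> j w) = \<bar>u0 - u\<bar>" using i(3) j(3) dist_along_axis by metis
      also have "\<dots> < \<delta>" using u u0 r by auto
      finally have "\<not> \<delta> \<le> dist (\<phi> i w0) (\<phi> j w)" by simp
      then have "j = i" using \<delta>[OF i(1) j(1) _ i(2) j(2)] by blast
      then show ?thesis using j by blast
    qed
    then show ?thesis using slice_gap_through_piece[OF i(1) porous[OF i(1)]] by blast
  qed
qed

lemma slices_porous_at_down_to_zero:
  assumes \<delta>: "\<And>i j x y. i < l \<Longrightarrow> j < l \<Longrightarrow> i \<noteq> j \<Longrightarrow> x \<in> F \<Longrightarrow> y \<in> F \<Longrightarrow> \<delta> \<le> dist (\<phi> i x) (\<phi> j y)"
    and R: "0 < R" "R < \<delta>" and m: "0 < m" "\<And>i. i < l \<Longrightarrow> m \<le> \<alpha> i" and c: "c \<le> 1"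
    and base: "\<And>r. R \<le> r \<Longrightarrow> r \<le> R / m \<Longrightarrow> slices_porous_at c r"
    and r: "0 < r" "r \<le> R / m"
  shows "slices_porous_at c r"
proof -
  obtain a where a: "0 < a" "a < 1" "\<And>i. i < l \<Longrightarrow> \<alpha> i \<le> a" by (rule max_ratio) blast
  have "\<forall>r. R * a ^ n \<le> r \<and> r \<le> R / m \<longrightarrow> slices_porous_at c r" for n
  proof (induction n)
    case (Suc n)
    show ?case
    proof (intro allI impI)
      fix r assume r: "R * a ^ Suc n \<le> r \<and> r \<le> R / m"
      have "0 < r" using r R a by (smt (verit) mult_pos_pos zero_less_power)
      show "slices_porous_at c r"
      proof (cases "R * a ^ n \<le> r")
        case False
        have "a ^ n \<le> 1" using a by (simp add: power_le_one)
        then have "r < R" using False R by (smt (verit) mult_left_le)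
        have "slices_porous_at c (r / \<alpha> i)" if i: "i < l" for i
        proof -
          have ai: "0 < \<alpha> i" "\<alpha> i \<le> a" "m \<le> \<alpha> i" using ratio_pos[OF i] a(3)[OF i] m(2)[OF i] by auto
          have "R * a ^ n \<le> r / a" using r a by (simp add: field_simps)
          also have "\<dots> \<le> r / \<alpha> i" using \<open>0 < r\<close> ai by (intro divide_left_mono) auto
          finally have "R * a ^ n \<le> r / \<alpha> i" .
          moreover have "r / \<alpha> i \<le> R / m" using \<open>r < R\<close> \<open>0 < r\<close> ai m(1) by (intro frac_le) auto
          ultimately show ?thesis using Suc by blast
        qed
        then show ?thesis using slices_porous_at_scale_down[OF \<delta> \<open>0 < r\<close> _ c] \<open>r < R\<close> R by simp
      qed (use Suc r in blast)
    qed
  qed (use base in simp)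
  moreover obtain n where "a ^ n < r / R" using real_arch_pow_inv[of "r / R" a] r R a by auto
  then have "R * a ^ n \<le> r" using R by (simp add: field_simps)
  ultimately show ?thesis using r by blast
qed

lemma slices_porous_at_all_small_scales:
  obtains c r0 where "0 < c" "0 < r0" "\<And>r. 0 < r \<Longrightarrow> r \<le> r0 \<Longrightarrow> slices_porous_at c r"
proof -
  obtain \<delta> where \<delta>: "0 < \<delta>"
    "\<And>i j x y. i < l \<Longrightarrow> j < l \<Longrightarrow> i \<noteq> j \<Longrightarrow> x \<in> F \<Longrightarrow> y \<in> F \<Longrightarrow> \<delta> \<le> dist (\<phi> i x) (\<phi> j y)"
    by (rule pieces_separated) blast
  obtain m where m: "0 < m" "\<And>i. i < l \<Longrightarrow> m \<le> \<alpha> i" by (rule min_ratio) blast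
  have "m < 1" using m(2)[of 0] ratio_less_1[of 0] two_le_l by simp
  define R where "R = \<delta> / 2"
  have R: "0 < R" "R < \<delta>" "R \<le> R / m" using \<delta>(1) m(1) \<open>m < 1\<close> by (auto simp: R_def field_simps)
  obtain g where g: "0 < g" "g \<le> R" "\<And>z. \<exists>b. 0 \<le> b \<and> b + g \<le> R \<and> {b .. b + g} \<inter> slice z = {}"
    using uniform_slice_gap[OF R(1)] by blast
  define c where "c = g / (R / m)"
  have "g * m \<le> g" by (rule mult_right_le_one_le) (use g(1) m(1) \<open>m < 1\<close> in auto)
  then have "g * m \<le> R" using g(2) by linarith
  then have c: "0 < c" "c \<le> 1" using g R m(1) by (auto simp: c_def field_simps)
  have "slices_porous_at c r" if r: "R \<le> r" "r \<le> R / m" for r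
    unfolding slices_porous_at_def
  proof
    fix z
    obtain b where b: "0 \<le> b" "b + g \<le> R" "{b .. b + g} \<inter> slice z = {}" using g(3) by blast
    have cr: "c * r \<le> g" using r R m(1) g(1) unfolding c_def by (simp add: field_simps mult_left_mono)
    then have "{b .. b + c * r} \<subseteq> {b .. b + g}" by auto
    then have "{b .. b + c * r} \<inter> slice z = {}" using b(3) by blast
    then show "\<exists>b. 0 \<le> b \<and> b + c * r \<le> r \<and> {b .. b + c * r} \<inter> slice z = {}"
      using b cr r by (intro exI[of _ b]) auto
  qed
  then show ?thesis
    using that[OF c(1)] slices_porous_at_down_to_zero[OF \<delta>(2) R(1,2) m c(2)] R m(1) by simp
qed

end

section \<open>Measures on coverable sets are not exact dimensional\<close>

lemma ln_ratio_tendsto_1_imp_le_powr: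
  assumes lim: "((\<lambda>r. ln (m r) / ln r) \<longlongrightarrow> 1) (at_right 0)" and \<theta>: "\<theta> < 1"
    and m: "\<And>r. 0 \<le> m r"
  shows "\<exists>n::nat. \<forall>r. 0 < r \<and> r < 1 / real (Suc n) \<longrightarrow> m r \<le> r powr \<theta>"
proof -
  have "eventually (\<lambda>r. \<theta> < ln (m r) / ln r) (at_right 0)" using order_tendstoD(1)[OF lim \<theta>] .
  then obtain b where b: "0 < b" "\<And>r. 0 < r \<Longrightarrow> r < b \<Longrightarrow> \<theta> < ln (m r) / ln r"
    unfolding eventually_at_right_field by auto
  have "0 < min b 1" using b(1) by simp
  then obtain n where "inverse (real (Suc n)) < min b 1" using reals_Archimedean by blast
  then have n: "1 / real (Suc n) < b" "1 / real (Suc n) < 1" by (simp_all add: inverse_eq_divide)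
  have "m r \<le> r powr \<theta>" if r: "0 < r" "r < 1 / real (Suc n)" for r
  proof (cases "m r = 0")
    case False
    then have "0 < m r" using m[of r] by simp
    have "r < 1" "r < b" using r n by linarith+
    then have "ln r < 0" using r by simp
    then have "ln (m r) < \<theta> * ln r"
      using b(2)[of r] r \<open>r < b\<close> by (simp add: pos_less_divide_eq neg_less_divide_eq)
    then have "exp (ln (m r)) < exp (\<theta> * ln r)" by simp
    then show ?thesis using \<open>0 < m r\<close> r by (simp add: powr_def)
  qed simp
  then show ?thesis by blast
qed

lemma measure_near_cover_le:
  fixes \<kappa> :: "'a::metric_space measure"
  assumes "finite_measure \<kappa>" and sets: "sets \<kappa> = sets borel" and C: "finite C"
    and cover: "\<And>x. x \<in> S \<Longrightarrow> \<exists>p\<in>C. dist x p \<le> \<rho>"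
    and balls: "\<And>y. y \<in> S \<Longrightarrow> measure \<kappa> (cball y (2 * \<rho>)) \<le> \<beta>" and "0 \<le> \<beta>"
  shows "\<exists>H \<in> sets \<kappa>. S \<subseteq> H \<and> measure \<kappa> H \<le> real (card C) * \<beta>"
proof -
  interpret finite_measure \<kappa> by fact
  define C' where "C' = {p \<in> C. cball p \<rho> \<inter> S \<noteq> {}}"
  have "finite C'" using C by (simp add: C'_def)
  define H where "H = (\<Union>p\<in>C'. cball p \<rho>)"
  have "H \<in> sets \<kappa>" unfolding H_def sets using \<open>finite C'\<close> by (intro sets.finite_UN borel_closed) auto
  moreover have "S \<subseteq> H"
  proof
    fix x assume "x \<in> S"
    then obtain p where "p \<in> C" "x \<in> cball p \<rho>" using cover by (force simp: dist_commute)
    then show "x \<in> H" using \<open>x \<in> S\<close> unfolding H_def C'_def by blast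
  qed
  moreover have "measure \<kappa> (cball p \<rho>) \<le> \<beta>" if p: "p \<in> C'" for p
  proof -
    obtain y where y: "y \<in> cball p \<rho>" "y \<in> S" using p unfolding C'_def by blast
    have "cball p \<rho> \<subseteq> cball y (2 * \<rho>)"
    proof
      fix w assume "w \<in> cball p \<rho>"
      moreover have "dist y p \<le> \<rho>" using y(1) by (simp add: dist_commute)
      ultimately show "w \<in> cball y (2 * \<rho>)" using dist_triangle[of y w p] by simp
    qed
    then have "measure \<kappa> (cball p \<rho>) \<le> measure \<kappa> (cball y (2 * \<rho>))"
      by (intro finite_measure_mono) (auto simp: sets)
    also have "\<dots> \<le> \<beta>" by (rule balls[OF y(2)])
    finally show ?thesis .
  qed
  moreover have "measure \<kappa> H \<le> (\<Sum>p\<in>C'. measure \<kappa> (cball p \<rho>))"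
    unfolding H_def by (rule measure_UNION_le[OF \<open>finite C'\<close>]) (auto simp: sets)
  ultimately have "measure \<kappa> H \<le> real (card C') * \<beta>"
    using sum_mono[of C' "\<lambda>p. measure \<kappa> (cball p \<rho>)" "\<lambda>_. \<beta>"] by simp
  also have "\<dots> \<le> real (card C) * \<beta>"
    using C \<open>0 \<le> \<beta>\<close> by (intro mult_right_mono) (auto simp: C'_def intro: card_mono)
  finally show ?thesis using \<open>H \<in> sets \<kappa>\<close> \<open>S \<subseteq> H\<close> by blast
qed

lemma prob_space_not_AE_in_small_sets:
  assumes "prob_space \<kappa>" and H: "\<And>n. H n \<in> sets \<kappa>" "\<And>n. measure \<kappa> (H n) \<le> (1/2) ^ (n + 2)"
  shows "\<not> (AE x in \<kappa>. \<exists>n. x \<in> H n)"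
proof
  interpret prob_space \<kappa> by fact
  assume "AE x in \<kappa>. \<exists>n. x \<in> H n"
  then have one: "measure \<kappa> (\<Union>n. H n) = 1" using AE_in_set_eq_1[of "\<Union>n. H n"] H(1) by auto
  have geom: "(\<lambda>n. (1/2::real) ^ (n + 2)) sums (1/2)"
    using sums_mult[OF geometric_sums[of "1/2::real"], of "1/4"] by (simp add: power_add)
  have "norm (measure \<kappa> (H n)) \<le> (1/2) ^ (n + 2)" for n using H(2)[of n] by simp
  then have "summable (\<lambda>n. measure \<kappa> (H n))"
    using summable_comparison_test'[OF sums_summable[OF geom], of 0 "\<lambda>n. measure \<kappa> (H n)"] by blast
  then have "measure \<kappa> (\<Union>n. H n) \<le> (\<Sum>n. measure \<kappa> (H n))"
    by (intro finite_measure_subadditive_countably) (auto simp: H(1))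
  also have "\<dots> \<le> 1/2" using suminf_le[OF H(2) \<open>summable _\<close> sums_summable[OF geom]] sums_unique[OF geom] by simp
  finally show False using one by simp
qed

lemma coverable_set_small_measure:
  fixes \<kappa> :: "(real^2) measure" and M :: nat
  assumes prob: "prob_space \<kappa>" and sets: "sets \<kappa> = sets borel" and M: "2 \<le> M" and A: "0 \<le> A"
    and cover: "\<And>k. k0 \<le> k \<Longrightarrow> \<exists>C. finite C \<and> real (card C) \<le> A * (real M - 1) ^ k
        \<and> (\<forall>x\<in>L. \<exists>p\<in>C. dist x p \<le> 1 / real M ^ k)"
    and M\<theta>: "real M powr \<theta> = real M - 1/2"
    and balls: "\<And>y r. y \<in> S \<Longrightarrow> 0 < r \<Longrightarrow> r < d \<Longrightarrow> measure \<kappa> (cball y r) \<le> r powr \<theta>"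
    and d: "0 < d" and \<epsilon>: "0 < \<epsilon>"
  shows "\<exists>H \<in> sets \<kappa>. S \<inter> L \<subseteq> H \<and> measure \<kappa> H \<le> \<epsilon>"
proof -
  interpret prob_space \<kappa> by (rule prob)
  define q where "q = (real M - 1) / (real M - 1/2)"
  have q: "0 \<le> q" "q < 1" using M by (simp_all add: q_def field_simps)
  have "eventually (\<lambda>k. A * 2 powr \<theta> * q ^ k < \<epsilon>) sequentially"
    using q \<epsilon> by (intro order_tendstoD(2)[OF tendsto_mult_right_zero] LIMSEQ_power_zero) auto
  moreover have "eventually (\<lambda>k. 2 * (1 / real M) ^ k < d) sequentially"
    using M d by (intro order_tendstoD(2)[OF tendsto_mult_right_zero] LIMSEQ_power_zero) auto
  ultimately have "eventually (\<lambda>k. k0 \<le> k \<and> A * 2 powr \<theta> * q ^ k < \<epsilon> \<and> 2 * (1 / real M) ^ k < d) sequentially"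
    using eventually_ge_at_top[of k0] by eventually_elim blast
  then obtain k where k: "k0 \<le> k" "A * 2 powr \<theta> * q ^ k < \<epsilon>" "2 * (1 / real M) ^ k < d"
    unfolding eventually_sequentially by blast
  obtain C where C: "finite C" "real (card C) \<le> A * (real M - 1) ^ k" "\<forall>x\<in>L. \<exists>p\<in>C. dist x p \<le> 1 / real M ^ k"
    using cover[OF k(1)] by blast
  have "(real M ^ k) powr \<theta> = (real M powr real k) powr \<theta>" using M by (simp add: powr_realpow)
  also have "\<dots> = (real M powr \<theta>) ^ k" using M by (simp add: powr_powr powr_power mult.commute)
  finally have "(2 * (1 / real M ^ k)) powr \<theta> = 2 powr \<theta> / (real M - 1/2) ^ k"
    using M M\<theta> by (simp add: powr_mult powr_divide)
  moreover have "measure \<kappa> (cball y (2 * (1 / real M ^ k))) \<le> (2 * (1 / real M ^ k)) powr \<theta>"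
    if "y \<in> S \<inter> L" for y using that k(3) M by (intro balls) (auto simp: power_one_over)
  ultimately have balls': "measure \<kappa> (cball y (2 * (1 / real M ^ k))) \<le> 2 powr \<theta> / (real M - 1/2) ^ k"
    if "y \<in> S \<inter> L" for y using that by simp
  have "0 \<le> 2 powr \<theta> / (real M - 1/2) ^ k" using M by simp
  moreover have "\<And>x. x \<in> S \<inter> L \<Longrightarrow> \<exists>p\<in>C. dist x p \<le> 1 / real M ^ k" using C(3) by blast
  ultimately have "\<exists>H\<in>sets \<kappa>. S \<inter> L \<subseteq> H \<and> measure \<kappa> H \<le> real (card C) * (2 powr \<theta> / (real M - 1/2) ^ k)"
    using measure_near_cover_le[OF finite_measure_axioms sets C(1) _ balls'] by presburger
  then obtain H where H: "H \<in> sets \<kappa>" "S \<inter> L \<subseteq> H"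
    "measure \<kappa> H \<le> real (card C) * (2 powr \<theta> / (real M - 1/2) ^ k)" by blast
  note H(3)
  also have "real (card C) * (2 powr \<theta> / (real M - 1/2) ^ k) \<le> A * (real M - 1) ^ k * (2 powr \<theta> / (real M - 1/2) ^ k)"
    using C(2) M by (intro mult_right_mono) auto
  also have "\<dots> = A * 2 powr \<theta> * q ^ k" by (simp add: q_def power_divide)
  finally show ?thesis using H(1,2) k(2) by (intro bexI[of _ H]) auto
qed

lemma not_exact_dimensional_1_if_coverable:
  fixes \<kappa> :: "(real^2) measure" and M :: nat
  assumes prob: "prob_space \<kappa>" and sets: "sets \<kappa> = sets borel" and AE_L: "AE x in \<kappa>. x \<in> L"
    and M: "2 \<le> M" and A: "0 \<le> A"
    and cover: "\<And>k. k0 \<le> k \<Longrightarrow> \<exists>C. finite C \<and> real (card C) \<le> A * (real M - 1) ^ k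
        \<and> (\<forall>x\<in>L. \<exists>p\<in>C. dist x p \<le> 1 / real M ^ k)"
  shows "\<not> exact_dimensional \<kappa> 1"
proof
  assume ed: "exact_dimensional \<kappa> 1"
  interpret prob_space \<kappa> by (rule prob)
  \<comment> \<open>Then (M - 1)^k balls of radius M^-k have mass at most A 2^\<theta> ((M - 1) / (M - 1/2))^k \<longrightarrow> 0.\<close>
  define \<theta> where "\<theta> = ln (real M - 1/2) / ln (real M)"
  have \<theta>: "\<theta> < 1" and M\<theta>: "real M powr \<theta> = real M - 1/2" using M by (simp_all add: \<theta>_def powr_def)
  define G where "G n = {x. \<forall>r. 0 < r \<and> r < 1 / real (Suc n) \<longrightarrow> measure \<kappa> (cball x r) \<le> r powr \<theta>}" for n
  have "AE x in \<kappa>. \<exists>n. x \<in> G n"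
    using ed unfolding exact_dimensional_def
  proof (rule eventually_mono)
    fix x assume "((\<lambda>r. ln (measure \<kappa> (cball x r)) / ln r) \<longlongrightarrow> 1) (at_right 0)"
    from ln_ratio_tendsto_1_imp_le_powr[OF this \<theta> measure_nonneg] show "\<exists>n. x \<in> G n"
      unfolding G_def by auto
  qed
  with AE_L have AE_LG: "AE x in \<kappa>. x \<in> L \<and> (\<exists>n. x \<in> G n)" by eventually_elim blast
  have "\<exists>H \<in> sets \<kappa>. G n \<inter> L \<subseteq> H \<and> measure \<kappa> H \<le> (1/2) ^ (n + 2)" for n
    by (rule coverable_set_small_measure[OF prob sets M A cover M\<theta>, where S = "G n" and d = "1 / real (Suc n)"])
      (simp_all add: G_def)
  then obtain H where H: "\<And>n. H n \<in> sets \<kappa>" "\<And>n. G n \<inter> L \<subseteq> H n" "\<And>n. measure \<kappa> (H n) \<le> (1/2) ^ (n + 2)"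
    by metis
  from AE_LG have "AE x in \<kappa>. \<exists>n. x \<in> H n" by eventually_elim (use H(2) in blast)
  then show False using prob_space_not_AE_in_small_sets[OF prob H(1,3)] by blast
qed

context ssc_axis
begin

lemma not_exact_dimensional_1_on_slice:
  assumes prob: "prob_space \<kappa>" and sets: "sets \<kappa> = sets borel"
    and on_slice: "AE x in \<kappa>. x \<in> F \<and> (\<exists>u. x = z + u *\<^sub>R v)"
  shows "\<not> exact_dimensional \<kappa> 1"
proof -
  obtain c r0 where c: "0 < c" "0 < r0" "\<And>r. 0 < r \<Longrightarrow> r \<le> r0 \<Longrightarrow> slices_porous_at c r"
    by (rule slices_porous_at_all_small_scales) blast
  obtain M :: nat and A k0 where M: "2 \<le> M" "0 \<le> A" and cover: "\<And>k. k0 \<le> k \<Longrightarrow>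
      \<exists>C. finite C \<and> real (card C) \<le> A * (real M - 1) ^ k \<and> (\<forall>u\<in>slice z. \<exists>p\<in>C. \<bar>u - p\<bar> \<le> 1 / real M ^ k)"
    using porous_set_covering[OF bounded_slice c(1,2) porous_at_slice[OF c(3)]] by blast
  let ?line = "\<lambda>u. z + u *\<^sub>R v"
  have "AE x in \<kappa>. x \<in> ?line ` slice z" using on_slice by eventually_elim (auto simp: slice_def)
  moreover have "\<exists>C. finite C \<and> real (card C) \<le> A * (real M - 1) ^ k
      \<and> (\<forall>x\<in>?line ` slice z. \<exists>p\<in>C. dist x p \<le> 1 / real M ^ k)" if k: "k0 \<le> k" for k
  proof -
    obtain C where C: "finite C" "real (card C) \<le> A * (real M - 1) ^ k"
      "\<forall>u\<in>slice z. \<exists>p\<in>C. \<bar>u - p\<bar> \<le> 1 / real M ^ k"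
      using cover[OF k] by blast
    have "real (card (?line ` C)) \<le> A * (real M - 1) ^ k"
      using card_image_le[OF C(1), of ?line] C(2) by linarith
    moreover have "\<forall>x\<in>?line ` slice z. \<exists>p\<in>?line ` C. dist x p \<le> 1 / real M ^ k"
      using C(3) by (auto simp: dist_along_axis unit_axis)
    ultimately show ?thesis using C(1) by blast
  qed
  ultimately show ?thesis by (rule not_exact_dimensional_1_if_coverable[OF prob sets _ M])
qed

end

section \<open>Slicings\<close>

lemma is_disintegration_AE_null:
  assumes "is_disintegration \<mu> P \<kappa>" "A \<in> sets borel" "emeasure \<mu> A = 0"
  shows "AE y in distr \<mu> borel P. emeasure (\<kappa> y) A = 0"
proof -
  have "(\<lambda>y. emeasure (\<kappa> y) A) \<in> borel_measurable borel"
    and "emeasure \<mu> A = (\<integral>\<^sup>+ y. emeasure (\<kappa> y) A \<partial>distr \<mu> borel P)"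
    using assms(1,2) unfolding is_disintegration_def by auto
  then show ?thesis using assms(3) by (subst nn_integral_0_iff_AE[symmetric]) auto
qed

lemma is_disintegration_AE_imp_ex:
  assumes "is_disintegration \<mu> P \<kappa>" "emeasure \<mu> UNIV \<noteq> 0" "AE y in distr \<mu> borel P. R y"
  shows "\<exists>y. R y"
proof (rule ccontr)
  assume "\<nexists>y. R y"
  from assms(3) have "AE y in distr \<mu> borel P. emeasure (\<kappa> y) UNIV = 0"
    by eventually_elim (use \<open>\<nexists>y. R y\<close> in blast)
  then have "(\<integral>\<^sup>+ y. emeasure (\<kappa> y) UNIV \<partial>distr \<mu> borel P) = 0" by (simp add: nn_integral_cong_AE)
  then show False using assms(1,2) unfolding is_disintegration_def by simp
qed

lemma is_disintegration_fibre:
  assumes dis: "is_disintegration \<mu> P \<kappa>" and prob: "prob_space \<mu>"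
    and F: "F \<in> sets borel" "AE x in \<mu>. x \<in> F" and Q: "AE y in distr \<mu> borel P. Q (\<kappa> y)"
    and sets: "sets \<mu> = sets borel"
  obtains y where "prob_space (\<kappa> y)" "sets (\<kappa> y) = sets borel" "AE x in \<kappa> y. P x = y \<and> x \<in> F" "Q (\<kappa> y)"
proof -
  have "emeasure \<mu> UNIV \<noteq> 0"
    using prob_space.emeasure_space_1[OF prob] sets_eq_imp_space_eq[OF sets] by simp
  have "emeasure \<mu> (- F) = 0"
    using F AE_iff_measurable[of "- F" \<mu> "\<lambda>x. x \<in> F"] sets sets_eq_imp_space_eq[OF sets] by auto
  then have "AE y in distr \<mu> borel P. emeasure (\<kappa> y) (- F) = 0"
    using F(1) by (intro is_disintegration_AE_null[OF dis]) auto
  moreover have "AE y in distr \<mu> borel P. prob_space (\<kappa> y) \<and> sets (\<kappa> y) = sets borel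
      \<and> emeasure (\<kappa> y) (P -` {y}) = 1"
    using dis unfolding is_disintegration_def by blast
  ultimately have "AE y in distr \<mu> borel P. (prob_space (\<kappa> y) \<and> sets (\<kappa> y) = sets borel
      \<and> emeasure (\<kappa> y) (P -` {y}) = 1) \<and> emeasure (\<kappa> y) (- F) = 0 \<and> Q (\<kappa> y)"
    using Q by eventually_elim blast
  then obtain y where y: "prob_space (\<kappa> y)" "sets (\<kappa> y) = sets borel"
    "emeasure (\<kappa> y) (P -` {y}) = 1" "emeasure (\<kappa> y) (- F) = 0" "Q (\<kappa> y)"
    using is_disintegration_AE_imp_ex[OF dis \<open>emeasure \<mu> UNIV \<noteq> 0\<close>] by blast
  interpret prob_space "\<kappa> y" by (rule y(1))
  have fibre: "P -` {y} \<in> sets (\<kappa> y)" using y(3) emeasure_notin_sets by force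
  moreover have "prob (P -` {y}) = 1" using y(3) by (simp add: emeasure_eq_measure)
  ultimately have "AE x in \<kappa> y. x \<in> P -` {y}" using AE_in_set_eq_1 by blast
  moreover have "AE x in \<kappa> y. x \<in> F" using y(2,4) F(1) by (intro AE_I'[of "- F"]) (auto simp: null_sets_def)
  ultimately have "AE x in \<kappa> y. P x = y \<and> x \<in> F" by eventually_elim simp
  then show ?thesis using that y(1,2,5) by blast
qed

lemma admits_1_slicingE:
  assumes "admits_1_slicing l Orth \<mu>" and orth: "\<And>i. i < l \<Longrightarrow> orthogonal_matrix (Orth i)"
  obtains v \<kappa> where "norm v = 1" "\<And>i. i < l \<Longrightarrow> preserves_axes v (Orth i)"
    "is_disintegration \<mu> (\<lambda>x. x - (x \<bullet> v) *\<^sub>R v) \<kappa>"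
    "AE y in distr \<mu> borel (\<lambda>x. x - (x \<bullet> v) *\<^sub>R v). exact_dimensional (\<kappa> y) 1"
proof -
  obtain V \<kappa> where V: "subspace V" "dim V = 1" "\<forall>i<l. (\<lambda>z. Orth i *v z) ` V = V"
    and slicing: "is_disintegration \<mu> (orth_proj (orthogonal_comp V)) \<kappa>"
      "AE y in distr \<mu> borel (orth_proj (orthogonal_comp V)). exact_dimensional (\<kappa> y) 1"
    using assms(1) unfolding admits_1_slicing_def by blast
  obtain v where v: "norm v = 1" "V = span {v}" using unit_vector_spans_line[OF V(1,2)] by blast
  have P: "orth_proj (orthogonal_comp V) = (\<lambda>x. x - (x \<bullet> v) *\<^sub>R v)"
    using orth_proj_orthogonal_comp_line[OF v(1)] v(2) by auto
  have "preserves_axes v (Orth i)" if i: "i < l" for i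
    using orthogonal_matrix_preserves_axes[OF orth[OF i] v(1)] V(3) v(2) i by blast
  then show ?thesis using that v(1) slicing[unfolded P] by blast
qed

lemma admits_1_slicing_gen_group_bound:
  assumes "admits_1_slicing l Orth \<mu>" and "\<And>i. i < l \<Longrightarrow> orthogonal_matrix (Orth i)"
  shows "finite (gen_group l Orth)" "card (gen_group l Orth) \<le> 4"
    "finite {A \<in> gen_group l Orth. det A = 1}" "card {A \<in> gen_group l Orth. det A = 1} \<le> 2"
proof -
  obtain v where "norm v = 1" "\<And>i. i < l \<Longrightarrow> preserves_axes v (Orth i)"
    using admits_1_slicingE[OF assms] by blast
  then show "finite (gen_group l Orth)" "card (gen_group l Orth) \<le> 4"
    "finite {A \<in> gen_group l Orth. det A = 1}" "card {A \<in> gen_group l Orth. det A = 1} \<le> 2"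
    using card_axes_preserving_group gen_group_preserves_axes by meson+
qed

context ifs_measure
begin

lemma not_admits_1_slicing_if_SSC:
  assumes ssc: "SSC l \<alpha> Orth t F"
  shows "\<not> admits_1_slicing l Orth \<mu>"
proof
  assume slicing_\<mu>: "admits_1_slicing l Orth \<mu>"
  obtain v \<kappa> where v: "norm v = 1" "\<And>i. i < l \<Longrightarrow> preserves_axes v (Orth i)"
    and slicing: "is_disintegration \<mu> (\<lambda>x. x - (x \<bullet> v) *\<^sub>R v) \<kappa>"
      "AE y in distr \<mu> borel (\<lambda>x. x - (x \<bullet> v) *\<^sub>R v). exact_dimensional (\<kappa> y) 1"
    using admits_1_slicingE[OF slicing_\<mu> orthogonal_Orth] by blast
  interpret ssc_axis l \<alpha> Orth t F v
    using ssc v unfolding preserves_axes_def by unfold_locales blast+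
  obtain y where y: "prob_space (\<kappa> y)" "sets (\<kappa> y) = sets borel" "exact_dimensional (\<kappa> y) 1"
    and fibre: "AE x in \<kappa> y. x - (x \<bullet> v) *\<^sub>R v = y \<and> x \<in> F"
    using is_disintegration_fibre[OF slicing(1) prob_space_mu borel_closed[OF closed_attractor]
        AE_in_attractor slicing(2) sets_mu] by blast
  from fibre have "AE x in \<kappa> y. x \<in> F \<and> (\<exists>u. x = y + u *\<^sub>R v)"
    by eventually_elim (metis diff_add_cancel)
  then show False using not_exact_dimensional_1_on_slice[OF y(1,2)] y(3) by blast
qed

end

theorem proposition1p2:
  fixes l :: nat and \<alpha> :: "nat \<Rightarrow> real" and Orth :: "nat \<Rightarrow> real^2^2" and t :: "nat \<Rightarrow> real^2"
    and p :: "nat \<Rightarrow> real" and F :: "(real^2) set" and \<mu> :: "(real^2) measure"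
  assumes "is_IFS l \<alpha> Orth t"
    and "is_attractor l \<alpha> Orth t F"
    and "\<not> in_affine_line F"
    and "self_similar_measure l \<alpha> Orth t p \<mu>"
  shows "((infinite (gen_group l Orth) \<or> card (gen_group l Orth) \<ge> 5
            \<or> infinite {A \<in> gen_group l Orth. det A = 1} \<or> card {A \<in> gen_group l Orth. det A = 1} > 2)
           \<longrightarrow> \<not> admits_1_slicing l Orth \<mu>)
         \<and> (SSC l \<alpha> Orth t F \<longrightarrow> \<not> admits_1_slicing l Orth \<mu>)"
proof -
  interpret ifs_measure l \<alpha> Orth t F p \<mu> using assms(1,2,4) by unfold_locales
  show ?thesis
    using admits_1_slicing_gen_group_bound[OF _ orthogonal_Orth] not_admits_1_slicing_if_SSC
    by fastforce
qed

end
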